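(* Let $n,m$ be positive integers and let $\Phi$ be an $m\times n$ random matrix whose entries are independent and each equal to $+1/\sqrt{m}$ or $-1/\sqrt{m}$ with probability $1/2$ each. For a nonzero $x\in\mathbb{R}^n$ define the distortion $$E(x) = \frac{\|\Phi x\|_2^2}{\|x\|_2^2} - 1 .$$ Then: (a) For every positive integer $q$, the moment $\mathbf{E}\,E(x)^q$ depends on $x$ only through $(x_1^2,\ldots,x_n^2)$, the quantity $\|x\|_2^{2q}\,\mathbf{E}\,E(x)^q$ is a polynomial in $(x_1^2,\ldots,x_n^2)$, and $\mathbf{E}\,E(x)^q$ is a Schur-concave function of $(x_1^2,\ldots,x_n^2)$. (b) Let $K=\|x\|_0$ be the number of nonzero coordinates of $x$, let $B\sim\mathsf{Binom}(K,1/2)$, and let $Z_1,\ldots,Z_m$ be i.i.d. copies of the standardized variable $\frac{B-\mathbf{E}B}{\sqrt{\mathbf{Var}[B]}}$. Define $$E_* = \frac{1}{m}\sum_{i=1}^m (Z_i^2-1).$$ Then for every integer $q\ge 2$, $$\mathbf{E}\,E(x)^q \le \mathbf{E}\,E_*^q,$$ with equality when all components of $x$ are equal.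
   Context: A function $f:D\to\mathbb{R}$ on a symmetric domain $D\subseteq\mathbb{R}^n$ is Schur-concave if $f(a)\ge f(b)$ whenever $a$ is majorized by $b$ (i.e. $a\prec b$: the sum of the $k$ largest entries of $a$ is at most that of $b$ for every $k$, with equal total sums). $\|x\|_0$ denotes the number of nonzero coordinates of $x$. *)

theory Defs
  imports "HOL-Probability.Probability"
begin

(* Vectors in R^n are functions nat => real; only coordinates j < n matter. *)

definition nonzero_vec :: "nat \<Rightarrow> (nat \<Rightarrow> real) \<Rightarrow> bool" where
  "nonzero_vec n x \<longleftrightarrow> (\<exists>j<n. x j \<noteq> 0)"

definition l0 :: "nat \<Rightarrow> (nat \<Rightarrow> real) \<Rightarrow> nat" where
  "l0 n x = card {j. j < n \<and> x j \<noteq> 0}"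

definition signmats :: "nat \<Rightarrow> nat \<Rightarrow> (nat \<Rightarrow> nat \<Rightarrow> real) set" where
  "signmats m n = {S. \<forall>i j. if i < m \<and> j < n then S i j \<in> {-1, 1} else S i j = 0}"

(* the random matrix Phi: uniform over sign matrices, scaled by 1/sqrt m *)
definition Phi_of :: "nat \<Rightarrow> (nat \<Rightarrow> nat \<Rightarrow> real) \<Rightarrow> nat \<Rightarrow> nat \<Rightarrow> real" where
  "Phi_of m S i j = S i j / sqrt (real m)"

definition distortion :: "nat \<Rightarrow> nat \<Rightarrow> (nat \<Rightarrow> nat \<Rightarrow> real) \<Rightarrow> (nat \<Rightarrow> real) \<Rightarrow> real" where
  "distortion m n S x =
     (\<Sum>i<m. (\<Sum>j<n. Phi_of m S i j * x j)\<^sup>2) / (\<Sum>j<n. (x j)\<^sup>2) - 1"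

definition moment :: "nat \<Rightarrow> nat \<Rightarrow> nat \<Rightarrow> (nat \<Rightarrow> real) \<Rightarrow> real" where
  "moment m n q x =
     measure_pmf.expectation (pmf_of_set (signmats m n)) (\<lambda>S. (distortion m n S x) ^ q)"

(* E [ E_*^q ]: Z_i = (B_i - E B)/sqrt(Var B), B_i iid Binom(K,1/2), E B = K/2, Var B = K/4 *)
definition estar_moment :: "nat \<Rightarrow> nat \<Rightarrow> nat \<Rightarrow> real" where
  "estar_moment m K q =
     measure_pmf.expectation (Pi_pmf {..<m} 0 (\<lambda>_. binomial_pmf K (1/2)))
       (\<lambda>B. ((1 / real m) * (\<Sum>i<m. ((real (B i) - real K / 2) / sqrt (real K / 4))\<^sup>2 - 1)) ^ q)"

definition poly_fun :: "nat \<Rightarrow> ((nat \<Rightarrow> real) \<Rightarrow> real) \<Rightarrow> bool" where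
  "poly_fun n P \<longleftrightarrow> (\<exists>A c. finite A \<and> (\<forall>\<alpha>\<in>A. \<forall>j\<ge>n. \<alpha> j = (0::nat)) \<and>
       (\<forall>a. P a = (\<Sum>\<alpha>\<in>A. c \<alpha> * (\<Prod>j<n. a j ^ \<alpha> j))))"

definition top_sum :: "nat \<Rightarrow> (nat \<Rightarrow> real) \<Rightarrow> nat \<Rightarrow> real" where
  "top_sum n a k = sum_list (take k (rev (sort (map a [0..<n]))))"

definition majorized :: "nat \<Rightarrow> (nat \<Rightarrow> real) \<Rightarrow> (nat \<Rightarrow> real) \<Rightarrow> bool" where
  "majorized n a b \<longleftrightarrow> (\<forall>k\<le>n. top_sum n a k \<le> top_sum n b k) \<and> (\<Sum>j<n. a j) = (\<Sum>j<n. b j)"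

definition schur_concave_on :: "nat \<Rightarrow> (nat \<Rightarrow> real) set \<Rightarrow> ((nat \<Rightarrow> real) \<Rightarrow> real) \<Rightarrow> bool" where
  "schur_concave_on n D f \<longleftrightarrow> (\<forall>a\<in>D. \<forall>b\<in>D. majorized n a b \<longrightarrow> f a \<ge> f b)"

(* domain of (x_1^2,...,x_n^2) for nonzero x: nonnegative, not all zero (symmetric) *)
definition sq_domain :: "nat \<Rightarrow> (nat \<Rightarrow> real) set" where
  "sq_domain n = {a. (\<forall>j<n. a j \<ge> 0) \<and> (\<forall>j\<ge>n. a j = 0) \<and> (\<exists>j<n. a j \<noteq> 0)}"

end

theory Submission
  imports Defs
begin

text \<open>
  Write \<open>S\<close> for the sign matrix, so that \<open>m \<parallel>x\<parallel>\<^sup>2 E(x) = \<parallel>S x\<parallel>\<^sup>2 - m \<parallel>x\<parallel>\<^sup>2\<close>.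
  Flipping the sign of one entry \<open>S i j\<close> preserves the uniform distribution, so in a polynomial in
  the products \<open>S i j * x j\<close> every term that is odd in \<open>S i j\<close> averages to zero, while
  \<open>(S i j * x j)\<^sup>2 = (x j)\<^sup>2\<close>. Eliminating the entries one at a time shows that the moments
  are polynomials in the squares \<open>(x j)\<^sup>2\<close>.

  Since majorization is generated by transfers between two coordinates (Hardy, Littlewood, Polya),
  Schur-concavity follows once the moment, with the other coordinates and \<open>(x u)\<^sup>2 + (x v)\<^sup>2\<close>
  fixed, is nondecreasing in \<open>x u * x v\<close>. Multiplying column \<open>v\<close> of \<open>S\<close> by column \<open>u\<close>
  is a measure-preserving bijection after which row \<open>i\<close> of \<open>S x\<close> reads
  \<open>S i u * (x u + S i v * x v) + (rest)\<close>. The same elimination, first of these twisted rows, whose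
  squares are \<open>(x u)\<^sup>2 + (x v)\<^sup>2 + 2 * S i v * x u * x v\<close>, and then of the remaining entries,
  leaves a polynomial in \<open>x u * x v\<close> with nonnegative coefficients.

  Finally, the squared coordinates of \<open>x\<close> majorize the flat vector with the same support size
  \<open>K\<close> and the same sum, and for a flat vector each row of \<open>S x\<close> is an affine function of a
  \<open>Binom(K, 1/2)\<close> count, so its moments are those of \<open>E\<^sub>*\<close>.
\<close>

lemma signmats_cases:
  "S \<in> signmats m n \<Longrightarrow> (if i < m \<and> j < n then S i j \<in> {-1, 1} else S i j = 0)"
  unfolding signmats_def by blast

lemma signmats_entry:
  "S \<in> signmats m n \<Longrightarrow> i < m \<Longrightarrow> j < n \<Longrightarrow> S i j = 1 \<or> S i j = -1"
  using signmats_cases[of S m n i j] by auto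

lemma signmats_outside:
  "S \<in> signmats m n \<Longrightarrow> \<not> (i < m \<and> j < n) \<Longrightarrow> S i j = 0"
  using signmats_cases[of S m n i j] by auto

lemma signmats_entry_sq:
  "S \<in> signmats m n \<Longrightarrow> i < m \<Longrightarrow> j < n \<Longrightarrow> S i j * S i j = 1"
  using signmats_entry by fastforce

lemma signmatsI:
  "(\<And>i j. i < m \<Longrightarrow> j < n \<Longrightarrow> S i j = 1 \<or> S i j = -1) \<Longrightarrow>
   (\<And>i j. \<not> (i < m \<and> j < n) \<Longrightarrow> S i j = 0) \<Longrightarrow> S \<in> signmats m n"
  unfolding signmats_def by auto

definition flip_entry :: "nat \<Rightarrow> nat \<Rightarrow> (nat \<Rightarrow> nat \<Rightarrow> real) \<Rightarrow> nat \<Rightarrow> nat \<Rightarrow> real" where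
  "flip_entry i j S = S(i := (S i)(j := - S i j))"

lemma flip_entry_apply: "flip_entry i j S i' j' = (if i' = i \<and> j' = j then - S i j else S i' j')"
  by (simp add: flip_entry_def)

lemma flip_entry_flip_entry [simp]: "flip_entry i j (flip_entry i j S) = S"
  by (auto simp: flip_entry_def fun_eq_iff)

lemma flip_entry_in_signmats:
  assumes "S \<in> signmats m n" "i < m" "j < n"
  shows "flip_entry i j S \<in> signmats m n"
proof (rule signmatsI)
  show "flip_entry i j S i' j' = 1 \<or> flip_entry i j S i' j' = -1" if "i' < m" "j' < n" for i' j'
    using signmats_entry[OF assms(1) that] signmats_entry[OF assms] by (auto simp: flip_entry_apply)
  show "flip_entry i j S i' j' = 0" if "\<not> (i' < m \<and> j' < n)" for i' j'
    using signmats_outside[OF assms(1) that] assms(2,3) that by (auto simp: flip_entry_apply)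
qed

definition sign_matrix_of :: "nat \<Rightarrow> nat \<Rightarrow> (nat \<Rightarrow> nat \<Rightarrow> bool) \<Rightarrow> nat \<Rightarrow> nat \<Rightarrow> real" where
  "sign_matrix_of m n h = (\<lambda>i j. if i < m \<and> j < n then (if h i j then 1 else -1) else 0)"

definition bool_matrices :: "nat \<Rightarrow> nat \<Rightarrow> (nat \<Rightarrow> nat \<Rightarrow> bool) set" where
  "bool_matrices m n = PiE_dflt {..<m} (\<lambda>_. False) (\<lambda>_. PiE_dflt {..<n} False (\<lambda>_. UNIV))"

lemma finite_bool_matrices: "finite (bool_matrices m n)"
  unfolding bool_matrices_def by (intro finite_PiE_dflt) auto

lemma bij_betw_sign_matrix_of: "bij_betw (sign_matrix_of m n) (bool_matrices m n) (signmats m n)"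
proof (rule bij_betw_byWitness[where f' = "\<lambda>S i j. i < m \<and> j < n \<and> S i j = 1"])
  show "\<forall>h\<in>bool_matrices m n. (\<lambda>i j. i < m \<and> j < n \<and> sign_matrix_of m n h i j = 1) = h"
    by (auto simp: bool_matrices_def PiE_dflt_def sign_matrix_of_def fun_eq_iff)
  show "\<forall>S\<in>signmats m n. sign_matrix_of m n (\<lambda>i j. i < m \<and> j < n \<and> S i j = 1) = S"
  proof
    fix S assume S: "S \<in> signmats m n"
    show "sign_matrix_of m n (\<lambda>i j. i < m \<and> j < n \<and> S i j = 1) = S"
    proof (intro ext)
      fix i j
      show "sign_matrix_of m n (\<lambda>i j. i < m \<and> j < n \<and> S i j = 1) i j = S i j"
        using signmats_entry[OF S, of i j] signmats_outside[OF S, of i j] by (auto simp: sign_matrix_of_def)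
    qed
  qed
  show "sign_matrix_of m n ` bool_matrices m n \<subseteq> signmats m n"
    unfolding signmats_def sign_matrix_of_def by auto
  show "(\<lambda>S i j. i < m \<and> j < n \<and> S i j = 1) ` signmats m n \<subseteq> bool_matrices m n"
    by (auto simp: bool_matrices_def PiE_dflt_def)
qed

lemma finite_signmats: "finite (signmats m n)"
  using bij_betw_finite[OF bij_betw_sign_matrix_of] finite_bool_matrices by simp

lemma signmats_nonempty: "signmats m n \<noteq> {}"
proof -
  have "sign_matrix_of m n (\<lambda>_ _. False) \<in> signmats m n"
    unfolding signmats_def sign_matrix_of_def by auto
  then show ?thesis by blast
qed

lemma bool_matrices_nonempty: "bool_matrices m n \<noteq> {}"
  by (metis bij_betw_imp_surj_on[OF bij_betw_sign_matrix_of] image_empty signmats_nonempty)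

lemma card_signmats_pos: "card (signmats m n) > 0"
  using finite_signmats signmats_nonempty by (simp add: card_gt_0_iff)

section \<open>Algebras of functions generated by a set of functions\<close>

inductive_set gen_alg :: "real set \<Rightarrow> ('z \<Rightarrow> real) set \<Rightarrow> ('z \<Rightarrow> real) set" for K G where
  const: "c \<in> K \<Longrightarrow> (\<lambda>_. c) \<in> gen_alg K G"
| gen: "g \<in> G \<Longrightarrow> g \<in> gen_alg K G"
| add: "f \<in> gen_alg K G \<Longrightarrow> g \<in> gen_alg K G \<Longrightarrow> (\<lambda>z. f z + g z) \<in> gen_alg K G"
| mult: "f \<in> gen_alg K G \<Longrightarrow> g \<in> gen_alg K G \<Longrightarrow> (\<lambda>z. f z * g z) \<in> gen_alg K G"

lemma gen_alg_sum:
  assumes "finite I" "0 \<in> K" "\<And>i. i \<in> I \<Longrightarrow> f i \<in> gen_alg K G"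
  shows "(\<lambda>z. \<Sum>i\<in>I. f i z) \<in> gen_alg K G"
  using assms by (induction I rule: finite_induct) (auto intro: gen_alg.intros)

lemma gen_alg_power:
  assumes "1 \<in> K" "f \<in> gen_alg K G"
  shows "(\<lambda>z. f z ^ k) \<in> gen_alg K G"
  by (induction k) (use assms gen_alg.const[of 1] gen_alg.mult in auto)

lemma gen_alg_diff:
  assumes "-1 \<in> K" "f \<in> gen_alg K G" "g \<in> gen_alg K G"
  shows "(\<lambda>z. f z - g z) \<in> gen_alg K G"
  using gen_alg.add[OF assms(2) gen_alg.mult[OF gen_alg.const[OF assms(1)] assms(3)]] by simp

lemma gen_alg_invariant:
  assumes "f \<in> gen_alg K G" "\<And>g. g \<in> G \<Longrightarrow> g (\<phi> z) = g z"
  shows "f (\<phi> z) = f z"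
  using assms(1) by induction (use assms(2) in auto)

lemma gen_alg_even_odd_decomp:
  assumes "f \<in> gen_alg K G" "G \<subseteq> insert g G'" "h \<in> gen_alg K G'" "\<And>z. z \<in> D \<Longrightarrow> g z * g z = h z"
    and "0 \<in> K" "1 \<in> K"
  shows "\<exists>e d. e \<in> gen_alg K G' \<and> d \<in> gen_alg K G' \<and> (\<forall>z\<in>D. f z = e z + g z * d z)"
  using assms(1)
proof induction
  case (const c)
  show ?case
    by (intro exI[of _ "\<lambda>_. c"] exI[of _ "\<lambda>_. 0"]) (use const assms in \<open>auto intro: gen_alg.const\<close>)
next
  case (gen g')
  show ?case
  proof (cases "g' = g")
    case True
    then show ?thesis
      by (intro exI[of _ "\<lambda>_. 0"] exI[of _ "\<lambda>_. 1"]) (use assms in \<open>auto intro: gen_alg.const\<close>)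
  next
    case False
    then show ?thesis
      by (intro exI[of _ g'] exI[of _ "\<lambda>_. 0"]) (use gen assms in \<open>auto intro: gen_alg.intros\<close>)
  qed
next
  case (add f1 f2)
  then obtain e1 d1 e2 d2 where "e1 \<in> gen_alg K G'" "d1 \<in> gen_alg K G'" "e2 \<in> gen_alg K G'" "d2 \<in> gen_alg K G'"
    "\<forall>z\<in>D. f1 z = e1 z + g z * d1 z" "\<forall>z\<in>D. f2 z = e2 z + g z * d2 z" by blast
  then show ?case
    by (intro exI[of _ "\<lambda>z. e1 z + e2 z"] exI[of _ "\<lambda>z. d1 z + d2 z"])
      (auto intro: gen_alg.add simp: algebra_simps)
next
  case (mult f1 f2)
  then obtain e1 d1 e2 d2 where ed: "e1 \<in> gen_alg K G'" "d1 \<in> gen_alg K G'" "e2 \<in> gen_alg K G'" "d2 \<in> gen_alg K G'"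
    and f: "\<forall>z\<in>D. f1 z = e1 z + g z * d1 z" "\<forall>z\<in>D. f2 z = e2 z + g z * d2 z" by blast
  have "f1 z * f2 z = (e1 z * e2 z + h z * (d1 z * d2 z)) + g z * (e1 z * d2 z + d1 z * e2 z)"
    if "z \<in> D" for z
    using f that assms(4)[OF that, symmetric] by (simp add: algebra_simps)
  moreover have "(\<lambda>z. e1 z * e2 z + h z * (d1 z * d2 z)) \<in> gen_alg K G'"
    and "(\<lambda>z. e1 z * d2 z + d1 z * e2 z) \<in> gen_alg K G'"
    using ed assms(3) by (auto intro!: gen_alg.add gen_alg.mult)
  ultimately show ?case by blast
qed

lemma sum_involution_odd_eq_0:
  fixes g :: "'a \<Rightarrow> real"
  assumes "\<And>s. s \<in> A \<Longrightarrow> \<phi> s \<in> A" "\<And>s. s \<in> A \<Longrightarrow> \<phi> (\<phi> s) = s"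
    and "\<And>s. s \<in> A \<Longrightarrow> g (\<phi> s) = - g s"
  shows "(\<Sum>s\<in>A. g s) = 0"
proof -
  have "(\<Sum>s\<in>A. g s) = (\<Sum>s\<in>A. g (\<phi> s))"
    by (rule sum.reindex_bij_witness[of A \<phi> \<phi>]) (use assms in auto)
  also have "\<dots> = - (\<Sum>s\<in>A. g s)"
    using assms(3) by (simp add: sum_negf)
  finally show ?thesis by simp
qed

text \<open>The odd part \<open>g * d\<close> of the decomposition sums to zero over the involution.\<close>

lemma sum_gen_alg_eliminate:
  fixes f :: "'s \<times> 'y \<Rightarrow> real"
  assumes f: "f \<in> gen_alg K G" and G: "G \<subseteq> insert g G'" and h: "h \<in> gen_alg K G'"
    and K: "0 \<in> K" "1 \<in> K"
    and \<phi>: "\<And>s. s \<in> A \<Longrightarrow> \<phi> s \<in> A" "\<And>s. s \<in> A \<Longrightarrow> \<phi> (\<phi> s) = s"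
    and sq: "\<And>s y. s \<in> A \<Longrightarrow> y \<in> Y \<Longrightarrow> g (s, y) * g (s, y) = h (s, y)"
    and odd: "\<And>s y. s \<in> A \<Longrightarrow> y \<in> Y \<Longrightarrow> g (\<phi> s, y) = - g (s, y)"
    and even: "\<And>g' s y. g' \<in> G' \<Longrightarrow> s \<in> A \<Longrightarrow> y \<in> Y \<Longrightarrow> g' (\<phi> s, y) = g' (s, y)"
  shows "\<exists>e\<in>gen_alg K G'. \<forall>y\<in>Y. (\<Sum>s\<in>A. f (s, y)) = (\<Sum>s\<in>A. e (s, y))"
proof -
  obtain e d where e: "e \<in> gen_alg K G'" and d: "d \<in> gen_alg K G'"
    and f_eq: "\<forall>z\<in>A \<times> Y. f z = e z + g z * d z"
    using gen_alg_even_odd_decomp[OF f G h _ K, of "A \<times> Y"] sq by fastforce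
  have "(\<Sum>s\<in>A. f (s, y)) = (\<Sum>s\<in>A. e (s, y))" if y: "y \<in> Y" for y
  proof -
    have d_even: "d (\<phi> s, y) = d (s, y)" if "s \<in> A" for s
      using gen_alg_invariant[OF d, of "\<lambda>(s, y). (\<phi> s, y)" "(s, y)"] even that y by auto
    have "(\<Sum>s\<in>A. g (s, y) * d (s, y)) = 0"
      by (rule sum_involution_odd_eq_0[of A \<phi>]) (use \<phi> odd d_even y in auto)
    then show ?thesis
      using f_eq y by (simp add: sum.distrib)
  qed
  with e show ?thesis by blast
qed

lemma poly_funI:
  fixes e :: "'i \<Rightarrow> nat \<Rightarrow> nat"
  assumes "finite I" "\<And>i j. i \<in> I \<Longrightarrow> n \<le> j \<Longrightarrow> e i j = 0"
    and "\<And>a. P a = (\<Sum>i\<in>I. c i * (\<Prod>j<n. a j ^ e i j))"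
  shows "poly_fun n P"
proof -
  define c' where "c' \<alpha> = (\<Sum>i\<in>{i \<in> I. e i = \<alpha>}. c i)" for \<alpha>
  have "P a = (\<Sum>\<alpha>\<in>e ` I. c' \<alpha> * (\<Prod>j<n. a j ^ \<alpha> j))" for a
  proof -
    have "(\<Sum>\<alpha>\<in>e ` I. c' \<alpha> * (\<Prod>j<n. a j ^ \<alpha> j)) =
          (\<Sum>\<alpha>\<in>e ` I. \<Sum>i\<in>{i \<in> I. e i = \<alpha>}. c i * (\<Prod>j<n. a j ^ e i j))"
      unfolding c'_def by (intro sum.cong refl) (auto simp: sum_distrib_right)
    also have "\<dots> = P a"
      unfolding assms(3) by (rule sum.group) (use assms(1) in auto)
    finally show ?thesis by simp
  qed
  moreover have "finite (e ` I)" "\<forall>\<alpha>\<in>e ` I. \<forall>j\<ge>n. \<alpha> j = 0"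
    using assms(1,2) by auto
  ultimately show ?thesis
    unfolding poly_fun_def by blast
qed

lemma poly_funE:
  assumes "poly_fun n P"
  obtains A c where "finite A" "\<forall>\<alpha>\<in>A. \<forall>j\<ge>n. \<alpha> j = (0::nat)"
    "\<forall>a. P a = (\<Sum>\<alpha>\<in>A. c \<alpha> * (\<Prod>j<n. a j ^ \<alpha> j))"
  using assms unfolding poly_fun_def by blast

lemma poly_fun_const: "poly_fun n (\<lambda>_. c)"
  by (rule poly_funI[where I = "{()}" and e = "\<lambda>_ _. 0" and c = "\<lambda>_. c"]) auto

lemma poly_fun_coord:
  assumes "k < n"
  shows "poly_fun n (\<lambda>a. a k)"
proof (rule poly_funI[where I = "{()}" and e = "\<lambda>_ j. if j = k then 1 else 0" and c = "\<lambda>_. 1"])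
  fix a :: "nat \<Rightarrow> real"
  have "(\<Prod>j<n. a j ^ (if j = k then 1 else 0)) = (\<Prod>j<n. if j = k then a j else 1)"
    by (intro prod.cong) auto
  then show "a k = (\<Sum>i\<in>{()}. 1 * (\<Prod>j<n. a j ^ (if j = k then 1 else 0)))"
    using assms by simp
qed (use assms in auto)

lemma poly_fun_add:
  assumes "poly_fun n P" "poly_fun n Q"
  shows "poly_fun n (\<lambda>a. P a + Q a)"
proof -
  obtain A c where A: "finite A" "\<forall>\<alpha>\<in>A. \<forall>j\<ge>n. \<alpha> j = 0"
    "\<forall>a. P a = (\<Sum>\<alpha>\<in>A. c \<alpha> * (\<Prod>j<n. a j ^ \<alpha> j))" using assms(1) by (rule poly_funE)
  obtain B d where B: "finite B" "\<forall>\<beta>\<in>B. \<forall>j\<ge>n. \<beta> j = 0"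
    "\<forall>a. Q a = (\<Sum>\<beta>\<in>B. d \<beta> * (\<Prod>j<n. a j ^ \<beta> j))" using assms(2) by (rule poly_funE)
  show ?thesis
    by (rule poly_funI[where I = "A <+> B" and c = "case_sum c d" and e = "case_sum id id"])
      (use A B in \<open>auto simp: sum.Plus o_def\<close>)
qed

lemma poly_fun_mult:
  assumes "poly_fun n P" "poly_fun n Q"
  shows "poly_fun n (\<lambda>a. P a * Q a)"
proof -
  obtain A c where A: "finite A" "\<forall>\<alpha>\<in>A. \<forall>j\<ge>n. \<alpha> j = 0"
    "\<forall>a. P a = (\<Sum>\<alpha>\<in>A. c \<alpha> * (\<Prod>j<n. a j ^ \<alpha> j))" using assms(1) by (rule poly_funE)
  obtain B d where B: "finite B" "\<forall>\<beta>\<in>B. \<forall>j\<ge>n. \<beta> j = 0"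
    "\<forall>a. Q a = (\<Sum>\<beta>\<in>B. d \<beta> * (\<Prod>j<n. a j ^ \<beta> j))" using assms(2) by (rule poly_funE)
  have "P a * Q a = (\<Sum>(\<alpha>, \<beta>)\<in>A \<times> B. (c \<alpha> * d \<beta>) * (\<Prod>j<n. a j ^ (\<alpha> j + \<beta> j)))" for a
  proof -
    have "P a * Q a = (\<Sum>\<alpha>\<in>A. \<Sum>\<beta>\<in>B. (c \<alpha> * (\<Prod>j<n. a j ^ \<alpha> j)) * (d \<beta> * (\<Prod>j<n. a j ^ \<beta> j)))"
      using A(3) B(3) by (simp add: sum_product)
    also have "\<dots> = (\<Sum>\<alpha>\<in>A. \<Sum>\<beta>\<in>B. (c \<alpha> * d \<beta>) * (\<Prod>j<n. a j ^ (\<alpha> j + \<beta> j)))"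
      by (simp add: power_add prod.distrib mult_ac)
    finally show ?thesis
      by (simp add: sum.cartesian_product)
  qed
  then show ?thesis
    by (intro poly_funI[where I = "A \<times> B" and c = "\<lambda>(\<alpha>, \<beta>). c \<alpha> * d \<beta>" and e = "\<lambda>(\<alpha>, \<beta>) j. \<alpha> j + \<beta> j"])
      (use A B in \<open>auto simp: case_prod_beta\<close>)
qed

lemma poly_fun_cmult: "poly_fun n P \<Longrightarrow> poly_fun n (\<lambda>a. c * P a)"
  using poly_fun_mult[OF poly_fun_const] by blast

lemma poly_fun_cong:
  assumes "poly_fun n P" "\<And>j. j < n \<Longrightarrow> a j = b j"
  shows "P a = P b"
  using assms(1) by (rule poly_funE) (use assms(2) in simp)

definition excess :: "nat \<Rightarrow> nat \<Rightarrow> (nat \<Rightarrow> nat \<Rightarrow> real) \<Rightarrow> (nat \<Rightarrow> real) \<Rightarrow> real" where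
  "excess m n S x = (\<Sum>i<m. (\<Sum>j<n. S i j * x j)\<^sup>2 - (\<Sum>j<n. (x j)\<^sup>2))"

definition excess_power_sum :: "nat \<Rightarrow> nat \<Rightarrow> nat \<Rightarrow> (nat \<Rightarrow> real) \<Rightarrow> real" where
  "excess_power_sum m n q x = (\<Sum>S\<in>signmats m n. excess m n S x ^ q)"

lemma distortion_eq_excess:
  assumes "m > 0" "(\<Sum>j<n. (x j)\<^sup>2) \<noteq> 0"
  shows "distortion m n S x = excess m n S x / (real m * (\<Sum>j<n. (x j)\<^sup>2))"
proof -
  let ?N = "\<Sum>j<n. (x j)\<^sup>2" and ?Y = "\<lambda>i. \<Sum>j<n. S i j * x j"
  have row: "(\<Sum>j<n. Phi_of m S i j * x j)\<^sup>2 = (?Y i)\<^sup>2 / real m" for i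
  proof -
    have "(\<Sum>j<n. Phi_of m S i j * x j) = ?Y i / sqrt (real m)"
      by (simp add: Phi_of_def sum_divide_distrib)
    then show ?thesis using assms(1) by (simp add: power_divide)
  qed
  have "distortion m n S x = (\<Sum>i<m. (?Y i)\<^sup>2) / real m / ?N - 1"
    by (simp add: distortion_def row sum_divide_distrib)
  also have "\<dots> = ((\<Sum>i<m. (?Y i)\<^sup>2) - real m * ?N) / (real m * ?N)"
    using assms by (simp add: field_simps)
  also have "(\<Sum>i<m. (?Y i)\<^sup>2) - real m * ?N = excess m n S x"
    by (simp add: excess_def sum_subtractf)
  finally show ?thesis .
qed

lemma moment_eq_excess_power_sum:
  assumes "m > 0" "(\<Sum>j<n. (x j)\<^sup>2) \<noteq> 0"
  shows "moment m n q x =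
    excess_power_sum m n q x / (real (card (signmats m n)) * (real m * (\<Sum>j<n. (x j)\<^sup>2)) ^ q)"
proof -
  let ?N = "\<Sum>j<n. (x j)\<^sup>2"
  have "moment m n q x = (\<Sum>S\<in>signmats m n. distortion m n S x ^ q) / real (card (signmats m n))"
    unfolding moment_def by (rule integral_pmf_of_set[OF signmats_nonempty finite_signmats])
  also have "(\<Sum>S\<in>signmats m n. distortion m n S x ^ q) = excess_power_sum m n q x / (real m * ?N) ^ q"
    by (simp add: distortion_eq_excess[OF assms] power_divide excess_power_sum_def sum_divide_distrib)
  finally show ?thesis by (simp add: field_simps)
qed

lemma moment_cong:
  assumes "\<And>j. j < n \<Longrightarrow> x j = x' j"
  shows "moment m n q x = moment m n q x'"
  using assms by (simp add: moment_def distortion_def)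

lemma sum_squares_pos:
  assumes "nonzero_vec n x"
  shows "0 < (\<Sum>j<n. (x j)\<^sup>2)"
proof -
  obtain k where "k < n" "x k \<noteq> 0"
    using assms by (auto simp: nonzero_vec_def)
  then show ?thesis
    by (intro sum_pos2[of _ k]) auto
qed

section \<open>The moments are polynomials in the squared coordinates\<close>

fun entry_coord :: "nat \<times> nat \<Rightarrow> (nat \<Rightarrow> nat \<Rightarrow> real) \<times> (nat \<Rightarrow> real) \<Rightarrow> real" where
  "entry_coord (i, j) (S, x) = S i j * x j"

fun coord_sq :: "nat \<Rightarrow> (nat \<Rightarrow> nat \<Rightarrow> real) \<times> (nat \<Rightarrow> real) \<Rightarrow> real" where
  "coord_sq j (S, x) = (x j)\<^sup>2"

lemma gen_alg_coord_sq_poly: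
  assumes "f \<in> gen_alg UNIV (coord_sq ` A)" "A \<subseteq> {..<n}"
  shows "\<exists>P. poly_fun n P \<and> (\<forall>S x. f (S, x) = P (\<lambda>j. (x j)\<^sup>2))"
  using assms(1)
proof induction
  case (const c)
  then show ?case using poly_fun_const by blast
next
  case (gen g)
  then obtain j where "j \<in> A" "g = coord_sq j" by blast
  then show ?case using poly_fun_coord[of j n] assms(2) by auto
next
  case (add f g)
  then obtain P Q where "poly_fun n P" "\<forall>S x. f (S, x) = P (\<lambda>j. (x j)\<^sup>2)"
    and "poly_fun n Q" "\<forall>S x. g (S, x) = Q (\<lambda>j. (x j)\<^sup>2)" by blast
  then show ?case using poly_fun_add[of n P Q] by auto
next
  case (mult f g)
  then obtain P Q where "poly_fun n P" "\<forall>S x. f (S, x) = P (\<lambda>j. (x j)\<^sup>2)"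
    and "poly_fun n Q" "\<forall>S x. g (S, x) = Q (\<lambda>j. (x j)\<^sup>2)" by blast
  then show ?case using poly_fun_mult[of n P Q] by auto
qed

lemma sum_signmats_gen_alg_poly:
  assumes "finite V" "V \<subseteq> {..<m} \<times> {..<n}" "A \<subseteq> {..<n}"
    and "f \<in> gen_alg UNIV (entry_coord ` V \<union> coord_sq ` A)"
  shows "\<exists>P. poly_fun n P \<and> (\<forall>x. (\<Sum>S\<in>signmats m n. f (S, x)) = P (\<lambda>j. (x j)\<^sup>2))"
  using assms
proof (induction V arbitrary: f A rule: finite_induct)
  case empty
  then obtain P where "poly_fun n P" "\<forall>S x. f (S, x) = P (\<lambda>j. (x j)\<^sup>2)"
    using gen_alg_coord_sq_poly[of f A n] by auto
  then show ?case
    using poly_fun_cmult[of n P "real (card (signmats m n))"] by auto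
next
  case (insert c V)
  obtain i j where c: "c = (i, j)" and ij: "i < m" "j < n"
    using insert.prems(1) by (cases c) auto
  have "\<exists>e\<in>gen_alg UNIV (entry_coord ` V \<union> coord_sq ` insert j A).
          \<forall>x\<in>UNIV. (\<Sum>S\<in>signmats m n. f (S, x)) = (\<Sum>S\<in>signmats m n. e (S, x))"
  proof (rule sum_gen_alg_eliminate[where g = "entry_coord c" and h = "coord_sq j" and \<phi> = "flip_entry i j"])
    show "f \<in> gen_alg UNIV (entry_coord ` insert c V \<union> coord_sq ` A)" by fact
    show "coord_sq j \<in> gen_alg UNIV (entry_coord ` V \<union> coord_sq ` insert j A)"
      by (intro gen_alg.gen) simp
    show "entry_coord c (S, x) * entry_coord c (S, x) = coord_sq j (S, x)"
      if "S \<in> signmats m n" for S x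
      using signmats_entry_sq[OF that ij] by (simp add: c power2_eq_square algebra_simps)
    show "g (flip_entry i j S, x) = g (S, x)"
      if "g \<in> entry_coord ` V \<union> coord_sq ` insert j A" for g S x
      using that insert.hyps(2) c by (auto simp: flip_entry_apply)
  qed (use ij c flip_entry_in_signmats in \<open>auto simp: flip_entry_apply\<close>)
  then obtain e where e: "e \<in> gen_alg UNIV (entry_coord ` V \<union> coord_sq ` insert j A)"
    and sums: "\<forall>x. (\<Sum>S\<in>signmats m n. f (S, x)) = (\<Sum>S\<in>signmats m n. e (S, x))" by blast
  show ?case
    using insert.IH[OF _ _ e] insert.prems(1,2) ij sums by auto
qed

lemma excess_power_sum_poly: "\<exists>P. poly_fun n P \<and> (\<forall>x. excess_power_sum m n q x = P (\<lambda>j. (x j)\<^sup>2))"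
proof -
  let ?G = "entry_coord ` ({..<m} \<times> {..<n}) \<union> coord_sq ` {..<n}"
  let ?f = "\<lambda>z. ((\<Sum>i<m. (\<Sum>j<n. entry_coord (i, j) z)\<^sup>2 - (\<Sum>j<n. coord_sq j z))) ^ q"
  have "?f \<in> gen_alg UNIV ?G"
    by (intro gen_alg_power gen_alg_sum gen_alg_diff gen_alg.gen) auto
  from sum_signmats_gen_alg_poly[of "{..<m} \<times> {..<n}" m n "{..<n}", OF _ _ _ this] obtain P
    where "poly_fun n P" "\<forall>x. (\<Sum>S\<in>signmats m n. ?f (S, x)) = P (\<lambda>j. (x j)\<^sup>2)"
    by auto
  then show ?thesis
    by (auto simp: excess_power_sum_def excess_def)
qed

lemma moment_poly:
  assumes "m > 0"
  shows "\<exists>P. poly_fun n P \<and>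
    (\<forall>x. nonzero_vec n x \<longrightarrow> (\<Sum>j<n. (x j)\<^sup>2) ^ q * moment m n q x = P (\<lambda>j. (x j)\<^sup>2))"
proof -
  obtain P where P: "poly_fun n P" "\<forall>x. excess_power_sum m n q x = P (\<lambda>j. (x j)\<^sup>2)"
    using excess_power_sum_poly by blast
  let ?c = "1 / (real (card (signmats m n)) * real m ^ q)"
  have "(\<Sum>j<n. (x j)\<^sup>2) ^ q * moment m n q x = ?c * P (\<lambda>j. (x j)\<^sup>2)" if "nonzero_vec n x" for x
  proof -
    have N: "0 < (\<Sum>j<n. (x j)\<^sup>2)" using sum_squares_pos[OF that] .
    have c: "0 < real (card (signmats m n))" using card_signmats_pos by simp
    have "(\<Sum>j<n. (x j)\<^sup>2) ^ q * moment m n q x =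
        (\<Sum>j<n. (x j)\<^sup>2) ^ q * (excess_power_sum m n q x /
          (real (card (signmats m n)) * (real m * (\<Sum>j<n. (x j)\<^sup>2)) ^ q))"
      using moment_eq_excess_power_sum[OF assms, where n = n and x = x and q = q] N by simp
    also have "\<dots> = excess_power_sum m n q x / (real (card (signmats m n)) * real m ^ q)"
      using N c assms by (simp add: power_mult_distrib field_simps)
    finally show ?thesis using P(2) by simp
  qed
  then show ?thesis
    using poly_fun_cmult[OF P(1)] by blast
qed

lemma moment_eq_if_squares_eq:
  assumes "m > 0" "nonzero_vec n x" "\<And>j. j < n \<Longrightarrow> (x j)\<^sup>2 = (y j)\<^sup>2"
  shows "moment m n q x = moment m n q y"
proof -
  have y: "nonzero_vec n y"
  proof -
    obtain k where "k < n" "x k \<noteq> 0"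
      using assms(2) by (auto simp: nonzero_vec_def)
    then show ?thesis
      using assms(3)[of k] by (auto simp: nonzero_vec_def)
  qed
  obtain P where P: "poly_fun n P"
    "\<forall>x. nonzero_vec n x \<longrightarrow> (\<Sum>j<n. (x j)\<^sup>2) ^ q * moment m n q x = P (\<lambda>j. (x j)\<^sup>2)"
    using moment_poly[OF assms(1)] by blast
  have N: "(\<Sum>j<n. (x j)\<^sup>2) = (\<Sum>j<n. (y j)\<^sup>2)"
    using assms(3) by simp
  have "P (\<lambda>j. (x j)\<^sup>2) = P (\<lambda>j. (y j)\<^sup>2)"
    by (rule poly_fun_cong[OF P(1)]) (use assms(3) in simp)
  moreover have "(\<Sum>j<n. (x j)\<^sup>2) ^ q * moment m n q x = P (\<lambda>j. (x j)\<^sup>2)"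
    using P(2) assms(2) by blast
  moreover have "(\<Sum>j<n. (y j)\<^sup>2) ^ q * moment m n q y = P (\<lambda>j. (y j)\<^sup>2)"
    using P(2) y by blast
  ultimately have "(\<Sum>j<n. (x j)\<^sup>2) ^ q * moment m n q x = (\<Sum>j<n. (x j)\<^sup>2) ^ q * moment m n q y"
    using N by simp
  then show ?thesis
    using sum_squares_pos[OF assms(2)] by simp
qed

section \<open>Monotonicity in the product of two coordinates\<close>

lemma sum_remove_two:
  assumes "finite A" "u \<in> A" "v \<in> A" "u \<noteq> v"
  shows "sum f A = f u + f v + sum f (A - {u, v})"
proof -
  have "sum f A = f u + sum f (A - {u})"
    using assms by (simp add: sum.remove)
  also have "sum f (A - {u}) = f v + sum f (A - {u} - {v})"
    using assms by (intro sum.remove) auto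
  also have "A - {u} - {v} = A - {u, v}"
    by auto
  finally show ?thesis
    by (simp add: add.assoc)
qed

lemma square_sum_signed:
  assumes "finite J" "\<And>j. j \<in> J \<Longrightarrow> s j * s j = (1::real)"
  shows "(\<Sum>j\<in>J. s j * x j)\<^sup>2 = (\<Sum>j\<in>J. (x j)\<^sup>2) + (\<Sum>j\<in>J. \<Sum>k\<in>J - {j}. s j * s k * (x j * x k))"
proof -
  have "(\<Sum>j\<in>J. s j * x j)\<^sup>2 = (\<Sum>j\<in>J. \<Sum>k\<in>J. s j * s k * (x j * x k))"
    by (simp add: power2_eq_square sum_product mult_ac)
  also have "\<dots> = (\<Sum>j\<in>J. (x j)\<^sup>2 + (\<Sum>k\<in>J - {j}. s j * s k * (x j * x k)))"
  proof (rule sum.cong[OF refl])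
    fix j assume j: "j \<in> J"
    then have "(\<Sum>k\<in>J. s j * s k * (x j * x k)) = s j * s j * (x j * x j) + (\<Sum>k\<in>J - {j}. s j * s k * (x j * x k))"
      using assms(1) by (simp add: sum.remove)
    then show "(\<Sum>k\<in>J. s j * s k * (x j * x k)) = (x j)\<^sup>2 + (\<Sum>k\<in>J - {j}. s j * s k * (x j * x k))"
      using assms(2)[OF j] by (simp add: power2_eq_square)
  qed
  finally show ?thesis
    by (simp add: sum.distrib)
qed

fun pair_prod :: "'s \<times> real \<times> real \<Rightarrow> real" where
  "pair_prod (S, y1, y2) = y1 * y2"

fun entry :: "nat \<times> nat \<Rightarrow> (nat \<Rightarrow> nat \<Rightarrow> real) \<times> 'y \<Rightarrow> real" where
  "entry (i, j) (S, y) = S i j"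

fun twisted_row :: "nat \<Rightarrow> nat \<Rightarrow> nat \<Rightarrow> (nat \<Rightarrow> nat \<Rightarrow> real) \<times> real \<times> real \<Rightarrow> real" where
  "twisted_row u v i (S, y1, y2) = S i u * (y1 + S i v * y2)"

definition pair_gens :: "nat \<Rightarrow> nat \<Rightarrow> (nat \<times> nat) set \<Rightarrow> nat set \<Rightarrow>
    ((nat \<Rightarrow> nat \<Rightarrow> real) \<times> real \<times> real \<Rightarrow> real) set" where
  "pair_gens u v V U = insert pair_prod (entry ` V \<union> twisted_row u v ` U)"

definition quarter_circle :: "real \<Rightarrow> (real \<times> real) set" where
  "quarter_circle s = {(y1, y2). 0 \<le> y1 \<and> 0 \<le> y2 \<and> y1\<^sup>2 + y2\<^sup>2 = s}"

definition mono_in_pair_prod :: "real \<Rightarrow> (real \<times> real \<Rightarrow> real) \<Rightarrow> bool" where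
  "mono_in_pair_prod s F \<longleftrightarrow>
    (\<forall>y\<in>quarter_circle s. \<forall>y'\<in>quarter_circle s. fst y * snd y \<le> fst y' * snd y' \<longrightarrow> F y \<le> F y')"

lemma mono_in_pair_prod_cong:
  assumes "mono_in_pair_prod s F" "\<And>y. y \<in> quarter_circle s \<Longrightarrow> G y = F y"
  shows "mono_in_pair_prod s G"
  using assms unfolding mono_in_pair_prod_def by simp

lemma gen_alg_nonneg_mono:
  assumes "f \<in> gen_alg {c. 0 \<le> c} G" "\<And>g. g \<in> G \<Longrightarrow> 0 \<le> g z \<and> g z \<le> g z'"
  shows "0 \<le> f z \<and> f z \<le> f z'"
  using assms(1)
proof induction
  case (mult f g)
  then show ?case by (auto intro: mult_mono order_trans)
qed (use assms(2) in \<open>auto intro: add_mono\<close>)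

lemma sum_entries_mono_in_pair_prod:
  assumes "finite V" "V \<subseteq> {..<m} \<times> {..<n}"
    and "f \<in> gen_alg {c. 0 \<le> c} (insert pair_prod (entry ` V))"
  shows "mono_in_pair_prod s (\<lambda>y. \<Sum>S\<in>signmats m n. f (S, y))"
  using assms
proof (induction V arbitrary: f rule: finite_induct)
  case empty
  have "f (S, y) \<le> f (S, y')" if "0 \<le> fst y * snd y" "fst y * snd y \<le> fst y' * snd y'" for S y y'
    using gen_alg_nonneg_mono[of f "{pair_prod}" "(S, y)" "(S, y')"] empty.prems that
    by (cases y, cases y') auto
  then show ?case
    unfolding mono_in_pair_prod_def quarter_circle_def by (auto intro!: sum_mono)
next
  case (insert c V)
  obtain i j where c: "c = (i, j)" and ij: "i < m" "j < n"
    using insert.prems(1) by (cases c) auto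
  have "\<exists>e\<in>gen_alg {c. 0 \<le> c} (insert pair_prod (entry ` V)).
          \<forall>y\<in>UNIV. (\<Sum>S\<in>signmats m n. f (S, y)) = (\<Sum>S\<in>signmats m n. e (S, y))"
  proof (rule sum_gen_alg_eliminate[where g = "entry c" and h = "\<lambda>_. 1" and \<phi> = "flip_entry i j"])
    show "entry c (S, y) * entry c (S, y) = 1" if "S \<in> signmats m n" for S y
      using signmats_entry_sq[OF that ij] by (simp add: c)
    show "g (flip_entry i j S, y) = g (S, y)" if "g \<in> insert pair_prod (entry ` V)" for g S y
      using that insert.hyps(2) c by (cases y) (auto simp: flip_entry_apply)
  qed (use insert.prems ij c flip_entry_in_signmats in \<open>auto simp: flip_entry_apply intro: gen_alg.const\<close>)
  then obtain e where e: "e \<in> gen_alg {c. 0 \<le> c} (insert pair_prod (entry ` V))"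
    and sums: "\<And>y. (\<Sum>S\<in>signmats m n. f (S, y)) = (\<Sum>S\<in>signmats m n. e (S, y))" by blast
  show ?case
    using insert.IH[OF _ e] insert.prems(1) sums by simp
qed

text \<open>Flipping \<open>S i u\<close> negates the \<open>i\<close>-th twisted row and fixes all other generators; on the
  quarter circle the square of that row is \<open>s + 2 * S i v * y1 * y2\<close>.\<close>

lemma sum_pair_gens_mono_in_pair_prod:
  assumes "finite U" "U \<subseteq> {..<m}" "finite V" "V \<subseteq> {..<m} \<times> {..<n}"
    and "\<forall>c\<in>V. snd c \<noteq> u" "\<forall>i\<in>U. (i, v) \<in> V" "u < n" "v < n" "u \<noteq> v" "0 \<le> s"
    and "f \<in> gen_alg {c. 0 \<le> c} (pair_gens u v V U)"
  shows "mono_in_pair_prod s (\<lambda>y. \<Sum>S\<in>signmats m n. f (S, y))"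
  using assms
proof (induction U arbitrary: f rule: finite_induct)
  case empty
  then show ?case
    using sum_entries_mono_in_pair_prod by (simp add: pair_gens_def)
next
  case (insert i U)
  have i: "i < m" and iv: "(i, v) \<in> V"
    using insert.prems by auto
  let ?h = "\<lambda>z. s + 2 * (entry (i, v) z * pair_prod z)"
  have "\<exists>e\<in>gen_alg {c. 0 \<le> c} (pair_gens u v V U).
          \<forall>y\<in>quarter_circle s. (\<Sum>S\<in>signmats m n. f (S, y)) = (\<Sum>S\<in>signmats m n. e (S, y))"
  proof (rule sum_gen_alg_eliminate[where g = "twisted_row u v i" and h = ?h and \<phi> = "flip_entry i u"])
    show "?h \<in> gen_alg {c. 0 \<le> c} (pair_gens u v V U)"
      using iv insert.prems(9) by (intro gen_alg.intros) (auto simp: pair_gens_def)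
    show "twisted_row u v i (S, y) * twisted_row u v i (S, y) = ?h (S, y)"
      if "S \<in> signmats m n" "y \<in> quarter_circle s" for S y
      using that signmats_entry_sq[OF that(1) i insert.prems(6)] signmats_entry_sq[OF that(1) i insert.prems(7)]
      by (cases y) (auto simp: quarter_circle_def power2_eq_square algebra_simps)
    show "g (flip_entry i u S, y) = g (S, y)" if "g \<in> pair_gens u v V U" for g S y
      using that insert.hyps(2) insert.prems(4) by (cases y) (auto simp: pair_gens_def flip_entry_apply)
  qed (use insert.prems i flip_entry_in_signmats in \<open>auto simp: pair_gens_def flip_entry_apply\<close>)
  then obtain e where e: "e \<in> gen_alg {c. 0 \<le> c} (pair_gens u v V U)"
    and sums: "\<And>y. y \<in> quarter_circle s \<Longrightarrow> (\<Sum>S\<in>signmats m n. f (S, y)) = (\<Sum>S\<in>signmats m n. e (S, y))"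
    by blast
  show ?case
    by (rule mono_in_pair_prod_cong[OF insert.IH[OF _ _ _ _ _ _ _ _ _ e] sums]) (use insert.prems in auto)
qed

definition mult_column :: "nat \<Rightarrow> nat \<Rightarrow> nat \<Rightarrow> (nat \<Rightarrow> nat \<Rightarrow> real) \<Rightarrow> nat \<Rightarrow> nat \<Rightarrow> real" where
  "mult_column m u v S = (\<lambda>i j. if i < m \<and> j = v then S i u * S i v else S i j)"

lemma mult_column_in_signmats:
  assumes "S \<in> signmats m n" "u < n" "v < n"
  shows "mult_column m u v S \<in> signmats m n"
proof (rule signmatsI)
  show "mult_column m u v S i j = 1 \<or> mult_column m u v S i j = -1" if "i < m" "j < n" for i j
    using signmats_entry[OF assms(1) that] signmats_entry[OF assms(1) that(1) assms(2)]
      signmats_entry[OF assms(1) that(1) assms(3)]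
    by (auto simp: mult_column_def)
  show "mult_column m u v S i j = 0" if "\<not> (i < m \<and> j < n)" for i j
    using signmats_outside[OF assms(1) that] that assms by (auto simp: mult_column_def)
qed

lemma mult_column_mult_column:
  assumes "S \<in> signmats m n" "u < n" "u \<noteq> v"
  shows "mult_column m u v (mult_column m u v S) = S"
proof (intro ext)
  fix i j
  show "mult_column m u v (mult_column m u v S) i j = S i j"
    using signmats_entry_sq[OF assms(1) _ assms(2), of i] assms(3)
    by (cases "i < m \<and> j = v") (auto simp: mult_column_def mult.assoc[symmetric])
qed

definition rest_row :: "nat \<Rightarrow> nat \<Rightarrow> nat \<Rightarrow> (nat \<Rightarrow> real) \<Rightarrow> nat \<Rightarrow> (nat \<Rightarrow> nat \<Rightarrow> real) \<times> 'y \<Rightarrow> real" where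
  "rest_row n u v x i z = (\<Sum>j\<in>{..<n} - {u, v}. entry (i, j) z * x j)"

text \<open>Once column \<open>v\<close> has been multiplied by column \<open>u\<close>, row \<open>i\<close> of \<open>S x\<close> reads
  \<open>S i u * (y1 + S i v * y2) + rest_row\<close>, and expanding its square minus the squared norm
  leaves only terms with nonnegative coefficients.\<close>

definition pair_form :: "nat \<Rightarrow> nat \<Rightarrow> nat \<Rightarrow> nat \<Rightarrow> (nat \<Rightarrow> real) \<Rightarrow>
    (nat \<Rightarrow> nat \<Rightarrow> real) \<times> real \<times> real \<Rightarrow> real" where
  "pair_form m n u v x z = (\<Sum>i<m. 2 * (entry (i, v) z * pair_prod z)
      + 2 * (twisted_row u v i z * rest_row n u v x i z)
      + (\<Sum>j\<in>{..<n} - {u, v}. \<Sum>k\<in>{..<n} - {u, v} - {j}. entry (i, j) z * entry (i, k) z * (x j * x k)))"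

lemma excess_mult_column:
  assumes "S \<in> signmats m n" "u < n" "v < n" "u \<noteq> v"
  shows "excess m n (mult_column m u v S) (x(u := y1, v := y2)) = pair_form m n u v x (S, y1, y2)"
proof -
  let ?J = "{..<n} - {u, v}" and ?x = "x(u := y1, v := y2)" and ?z = "(S, y1, y2)"
  have "(\<Sum>j\<in>?J. (?x j)\<^sup>2) = (\<Sum>j\<in>?J. (x j)\<^sup>2)"
    by (intro sum.cong) auto
  then have N: "(\<Sum>j<n. (?x j)\<^sup>2) = y1\<^sup>2 + y2\<^sup>2 + (\<Sum>j\<in>?J. (x j)\<^sup>2)"
    using sum_remove_two[of "{..<n}" u v "\<lambda>j. (?x j)\<^sup>2"] assms(2-4) by simp
  have "(\<Sum>j<n. mult_column m u v S i j * ?x j)\<^sup>2 - (\<Sum>j<n. (?x j)\<^sup>2) =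
      2 * (entry (i, v) ?z * pair_prod ?z) + 2 * (twisted_row u v i ?z * rest_row n u v x i ?z)
      + (\<Sum>j\<in>?J. \<Sum>k\<in>?J - {j}. entry (i, j) ?z * entry (i, k) ?z * (x j * x k))" if i: "i < m" for i
  proof -
    define W where "W = twisted_row u v i ?z"
    define R where "R = rest_row n u v x i ?z"
    have "(\<Sum>j\<in>?J. mult_column m u v S i j * ?x j) = R"
      unfolding R_def rest_row_def by (intro sum.cong) (auto simp: mult_column_def)
    then have "(\<Sum>j<n. mult_column m u v S i j * ?x j) = W + R"
      using sum_remove_two[of "{..<n}" u v "\<lambda>j. mult_column m u v S i j * ?x j"] assms(2-4) i
      by (simp add: W_def mult_column_def algebra_simps)
    moreover have "W\<^sup>2 = y1\<^sup>2 + y2\<^sup>2 + 2 * (S i v * (y1 * y2))"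
    proof -
      have "W\<^sup>2 = (S i u * S i u) * (y1\<^sup>2 + (S i v * S i v) * y2\<^sup>2 + 2 * (S i v * (y1 * y2)))"
        by (simp add: W_def power2_eq_square algebra_simps)
      then show ?thesis
        using signmats_entry_sq[OF assms(1) i assms(2)] signmats_entry_sq[OF assms(1) i assms(3)] by simp
    qed
    moreover have "R\<^sup>2 = (\<Sum>j\<in>?J. (x j)\<^sup>2) + (\<Sum>j\<in>?J. \<Sum>k\<in>?J - {j}. S i j * S i k * (x j * x k))"
      unfolding R_def rest_row_def using signmats_entry_sq[OF assms(1) i]
      by (subst square_sum_signed) auto
    ultimately show ?thesis
      unfolding N by (simp add: W_def R_def power2_eq_square algebra_simps)
  qed
  then show ?thesis
    unfolding excess_def pair_form_def by (intro sum.cong) auto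
qed

lemma pair_form_power_in_gen_alg:
  assumes "\<And>j. j < n \<Longrightarrow> 0 \<le> x j" "u < n" "v < n" "u \<noteq> v"
  shows "(\<lambda>z. pair_form m n u v x z ^ q) \<in>
    gen_alg {c. 0 \<le> c} (pair_gens u v {(i, j). i < m \<and> j < n \<and> j \<noteq> u} {..<m})"
  unfolding pair_form_def rest_row_def
  by (intro gen_alg_power gen_alg_sum gen_alg.add gen_alg.mult gen_alg.const gen_alg.gen)
    (use assms in \<open>auto simp: pair_gens_def\<close>)

lemma excess_power_sum_mono_in_pair_prod:
  assumes "\<And>j. j < n \<Longrightarrow> 0 \<le> x j" "u < n" "v < n" "u \<noteq> v" "0 \<le> s"
  shows "mono_in_pair_prod s (\<lambda>(y1, y2). excess_power_sum m n q (x(u := y1, v := y2)))"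
proof (rule mono_in_pair_prod_cong)
  show "mono_in_pair_prod s (\<lambda>y. \<Sum>S\<in>signmats m n. pair_form m n u v x (S, y) ^ q)"
    by (rule sum_pair_gens_mono_in_pair_prod[OF _ _ _ _ _ _ assms(2-5) pair_form_power_in_gen_alg[OF assms(1-4)]])
      (use assms(3,4) in auto)
  have "excess_power_sum m n q (x(u := y1, v := y2)) = (\<Sum>S\<in>signmats m n. pair_form m n u v x (S, y1, y2) ^ q)"
    for y1 y2
  proof -
    have "excess_power_sum m n q (x(u := y1, v := y2)) =
        (\<Sum>S\<in>signmats m n. excess m n (mult_column m u v S) (x(u := y1, v := y2)) ^ q)"
      unfolding excess_power_sum_def
      by (rule sum.reindex_bij_witness[of _ "mult_column m u v" "mult_column m u v"])
        (use mult_column_in_signmats mult_column_mult_column assms(2-4) in auto)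
    then show ?thesis
      using excess_mult_column[OF _ assms(2-4)] by simp
  qed
  then show "(case y of (y1, y2) \<Rightarrow> excess_power_sum m n q (x(u := y1, v := y2))) =
      (\<Sum>S\<in>signmats m n. pair_form m n u v x (S, y) ^ q)" for y
    by (cases y) simp
qed

abbreviation sq_moment :: "nat \<Rightarrow> nat \<Rightarrow> nat \<Rightarrow> (nat \<Rightarrow> real) \<Rightarrow> real" where
  "sq_moment m n q c \<equiv> moment m n q (\<lambda>j. sqrt (c j))"

lemma sq_moment_transfer_mono:
  assumes "m > 0" "\<And>j. j < n \<Longrightarrow> 0 \<le> c j" "0 < (\<Sum>j<n. c j)"
    and "u < n" "v < n" "u \<noteq> v" "0 \<le> \<delta>" "c v + \<delta> \<le> c u - \<delta>"
  shows "sq_moment m n q c \<le> sq_moment m n q (c(u := c u - \<delta>, v := c v + \<delta>))"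
proof -
  let ?c' = "c(u := c u - \<delta>, v := c v + \<delta>)" and ?x = "\<lambda>j. sqrt (c j)"
  have cuv: "0 \<le> c u" "0 \<le> c v"
    using assms(2,4,5) by auto
  have c'_nonneg: "0 \<le> ?c' j" if "j < n" for j
    using assms(2)[OF that] assms(7,8) cuv by auto
  have "(c u - \<delta>) * (c v + \<delta>) - c u * c v = \<delta> * (c u - c v - \<delta>)"
    by (simp add: algebra_simps)
  moreover have "0 \<le> \<delta> * (c u - c v - \<delta>)"
    using assms(7,8) by simp
  ultimately have "c u * c v \<le> (c u - \<delta>) * (c v + \<delta>)"
    by linarith
  then have prod: "sqrt (c u) * sqrt (c v) \<le> sqrt (c u - \<delta>) * sqrt (c v + \<delta>)"
    by (simp flip: real_sqrt_mult)
  have "mono_in_pair_prod (c u + c v) (\<lambda>(y1, y2). excess_power_sum m n q (?x(u := y1, v := y2)))"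
    using assms(2,4-6) cuv by (intro excess_power_sum_mono_in_pair_prod) auto
  then have "excess_power_sum m n q (?x(u := sqrt (c u), v := sqrt (c v))) \<le>
      excess_power_sum m n q (?x(u := sqrt (c u - \<delta>), v := sqrt (c v + \<delta>)))"
    unfolding mono_in_pair_prod_def quarter_circle_def using prod cuv assms(7,8) by auto
  moreover have "?x(u := sqrt (c u), v := sqrt (c v)) = ?x"
    by auto
  moreover have "?x(u := sqrt (c u - \<delta>), v := sqrt (c v + \<delta>)) = (\<lambda>j. sqrt (?c' j))"
    using assms(6) by auto
  ultimately have le: "excess_power_sum m n q ?x \<le> excess_power_sum m n q (\<lambda>j. sqrt (?c' j))"
    by simp
  have N: "(\<Sum>j<n. (sqrt (c j))\<^sup>2) = (\<Sum>j<n. c j)" "(\<Sum>j<n. (sqrt (?c' j))\<^sup>2) = (\<Sum>j<n. c j)"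
    using sum_remove_two[of "{..<n}" u v ?c'] sum_remove_two[of "{..<n}" u v c] assms(2,4-6) c'_nonneg
    by simp_all
  let ?D = "real (card (signmats m n)) * (real m * (\<Sum>j<n. c j)) ^ q"
  have "sq_moment m n q c = excess_power_sum m n q ?x / ?D"
    using moment_eq_excess_power_sum[where m = m and n = n and x = ?x and q = q] N(1) assms(1,3) by simp
  moreover have "sq_moment m n q ?c' = excess_power_sum m n q (\<lambda>j. sqrt (?c' j)) / ?D"
    using moment_eq_excess_power_sum[where m = m and n = n and x = "\<lambda>j. sqrt (?c' j)" and q = q] N(2) assms(1,3) by simp
  moreover have "0 < ?D"
    using card_signmats_pos[of m n] assms(1,3) by simp
  ultimately show ?thesis
    using le by (simp add: divide_right_mono)
qed

section \<open>Majorization by transfers\<close>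

lemma sum_lessThan_split:
  fixes f :: "nat \<Rightarrow> real"
  assumes "j \<le> k"
  shows "(\<Sum>l<k. f l) = (\<Sum>l<j. f l) + (\<Sum>l\<in>{j..<k}. f l)"
  using sum.atLeastLessThan_concat[of 0 j k f] assms by (simp add: atLeast0LessThan)

lemma majorized_exists_excess:
  fixes a b :: "nat \<Rightarrow> real"
  assumes prefix: "\<And>r. r \<le> n \<Longrightarrow> (\<Sum>l<r. a l) \<le> (\<Sum>l<r. b l)"
    and differ: "d < n" "a d \<noteq> b d"
  shows "\<exists>l<n. a l < b l"
proof (rule ccontr)
  assume "\<not> (\<exists>l<n. a l < b l)"
  then have le: "\<forall>l<n. b l \<le> a l"
    using not_less by blast
  then have "b d < a d"
    using differ by (simp add: order.strict_iff_order)
  then have "(\<Sum>l<Suc d. b l) < (\<Sum>l<Suc d. a l)"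
    using le differ(1) by (intro sum_strict_mono_ex1) auto
  then show False
    using prefix[of "Suc d"] differ(1) by simp
qed

lemma majorized_exists_deficit:
  fixes a b :: "nat \<Rightarrow> real"
  assumes prefix: "\<And>r. r \<le> n \<Longrightarrow> (\<Sum>l<r. a l) \<le> (\<Sum>l<r. b l)"
    and total: "(\<Sum>l<n. a l) = (\<Sum>l<n. b l)"
    and j: "j < n" "a j < b j" and after_j: "\<And>l. j < l \<Longrightarrow> l < n \<Longrightarrow> b l \<le> a l"
  shows "\<exists>l. j < l \<and> l < n \<and> b l < a l"
proof (rule ccontr)
  assume "\<not> ?thesis"
  then have "\<not> b l < a l" if "j < l" "l < n" for l
    using that by blast
  then have "a l = b l" if "j < l" "l < n" for l
    using after_j[OF that] that by force
  then have "(\<Sum>l\<in>{Suc j..<n}. a l) = (\<Sum>l\<in>{Suc j..<n}. b l)"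
    by (intro sum.cong) auto
  moreover have "(\<Sum>l<Suc j. a l) < (\<Sum>l<Suc j. b l)"
    using prefix[of j] j by simp
  ultimately have "(\<Sum>l<n. a l) < (\<Sum>l<n. b l)"
    using sum_lessThan_split[of "Suc j" n a] sum_lessThan_split[of "Suc j" n b] j(1) by simp
  then show False
    using total by simp
qed

lemma majorization_pivots:
  fixes a b :: "nat \<Rightarrow> real"
  assumes prefix: "\<And>r. r \<le> n \<Longrightarrow> (\<Sum>l<r. a l) \<le> (\<Sum>l<r. b l)"
    and total: "(\<Sum>l<n. a l) = (\<Sum>l<n. b l)"
    and differ: "d < n" "a d \<noteq> b d"
  obtains j k where "j < k" "k < n" "a j < b j" "b k < a k" "\<And>l. j < l \<Longrightarrow> l < k \<Longrightarrow> a l = b l"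
proof -
  let ?Lt = "{l. l < n \<and> a l < b l}"
  have "?Lt \<noteq> {}"
    using majorized_exists_excess[OF prefix differ] by auto
  define j where "j = Max ?Lt"
  have j: "j < n" "a j < b j"
    using Max_in[of ?Lt] \<open>?Lt \<noteq> {}\<close> by (auto simp: j_def)
  have after_j: "b l \<le> a l" if "j < l" "l < n" for l
  proof (rule ccontr)
    assume "\<not> b l \<le> a l"
    then have "l \<le> j"
      unfolding j_def using that by (intro Max_ge) auto
    then show False
      using that by simp
  qed
  let ?Gt = "{l. j < l \<and> l < n \<and> b l < a l}"
  have "?Gt \<noteq> {}"
    using majorized_exists_deficit[OF prefix total j after_j] by auto
  define k where "k = Min ?Gt"
  have k: "j < k" "k < n" "b k < a k"
    using Min_in[of ?Gt] \<open>?Gt \<noteq> {}\<close> by (auto simp: k_def)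
  have "a l = b l" if "j < l" "l < k" for l
  proof (rule ccontr)
    assume "a l \<noteq> b l"
    then have "b l < a l"
      using after_j[of l] that k(2) by simp
    then have "k \<le> l"
      unfolding k_def using that k(2) by (intro Min_le) auto
    then show False
      using that by simp
  qed
  then show thesis
    using that j k by blast
qed

lemma sum_lessThan_transfer:
  fixes b :: "nat \<Rightarrow> real"
  assumes "j \<noteq> k"
  shows "(\<Sum>l<r. (b(j := b j - \<delta>, k := b k + \<delta>)) l) =
    (\<Sum>l<r. b l) - (if j < r then \<delta> else 0) + (if k < r then \<delta> else 0)"
proof -
  have "(b(j := b j - \<delta>, k := b k + \<delta>)) l = b l - (if l = j then \<delta> else 0) + (if l = k then \<delta> else 0)" for l
    using assms by auto
  then show ?thesis
    by (simp add: sum.distrib sum_subtractf)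
qed

lemma prefix_sums_after_transfer:
  fixes a b :: "nat \<Rightarrow> real"
  assumes prefix: "\<And>r. r \<le> n \<Longrightarrow> (\<Sum>l<r. a l) \<le> (\<Sum>l<r. b l)"
    and "j < k" "k < n" "\<And>l. j < l \<Longrightarrow> l < k \<Longrightarrow> a l = b l" "\<delta> \<le> b j - a j"
    and "r \<le> n"
  shows "(\<Sum>l<r. a l) \<le> (\<Sum>l<r. (b(j := b j - \<delta>, k := b k + \<delta>)) l)"
proof -
  have shift: "(\<Sum>l<r. (b(j := b j - \<delta>, k := b k + \<delta>)) l) =
      (\<Sum>l<r. b l) - (if j < r then \<delta> else 0) + (if k < r then \<delta> else 0)"
    using assms(2) by (intro sum_lessThan_transfer) simp
  show ?thesis
  proof (cases "j < r \<and> r \<le> k")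
    case True
    have "(\<Sum>l\<in>{j..<r}. b l - a l) = b j - a j"
      using True assms(4) by (simp add: sum.atLeast_Suc_lessThan)
    then have "(\<Sum>l<r. b l - a l) = (\<Sum>l<j. b l - a l) + (b j - a j)"
      using sum_lessThan_split[of j r "\<lambda>l. b l - a l"] True by simp
    moreover have "0 \<le> (\<Sum>l<j. b l - a l)"
      using prefix[of j] assms(2,3) by (simp add: sum_subtractf)
    ultimately show ?thesis
      using shift True assms(5) by (simp add: sum_subtractf)
  next
    case False
    then show ?thesis
      using shift prefix[OF assms(6)] assms(2) by auto
  qed
qed

lemma transfer_reduces_differences:
  fixes a b :: "nat \<Rightarrow> real"
  assumes "j < n" "k < n" "j \<noteq> k" "a j < b j" "b k < a k"
  defines "\<delta> \<equiv> min (b j - a j) (a k - b k)"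
  shows "{l. l < n \<and> a l \<noteq> (b(j := b j - \<delta>, k := b k + \<delta>)) l} \<subset> {l. l < n \<and> a l \<noteq> b l}"
    (is "{l. l < n \<and> a l \<noteq> ?b' l} \<subset> _")
proof -
  have "?b' j = a j \<or> ?b' k = a k"
    using assms(3) by (cases "b j - a j \<le> a k - b k") (simp_all add: \<delta>_def)
  then have "\<exists>l. l < n \<and> a l \<noteq> b l \<and> a l = ?b' l"
    using assms(1-5) by (metis less_irrefl)
  moreover have "{l. l < n \<and> a l \<noteq> ?b' l} \<subseteq> {l. l < n \<and> a l \<noteq> b l}"
  proof safe
    fix l assume "l < n" "a l \<noteq> ?b' l" "a l = b l"
    then show False
      using assms(4,5) by (cases "l = j \<or> l = k") auto
  qed
  ultimately show ?thesis
    by blast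
qed

text \<open>Induction on the number of coordinates where \<open>a\<close> and \<open>b\<close> differ: the largest transfer
  between the pivots that keeps \<open>b\<close> majorizing \<open>a\<close> makes one more coordinate agree.\<close>

lemma le_if_majorized_by_transfers:
  fixes F :: "(nat \<Rightarrow> real) \<Rightarrow> real" and a b :: "nat \<Rightarrow> real"
  assumes transfer: "\<And>c u v \<delta>. (\<And>j. j < n \<Longrightarrow> 0 \<le> c j) \<Longrightarrow> 0 < (\<Sum>j<n. c j) \<Longrightarrow>
      u < n \<Longrightarrow> v < n \<Longrightarrow> u \<noteq> v \<Longrightarrow> 0 \<le> \<delta> \<Longrightarrow> c v + \<delta> \<le> c u - \<delta> \<Longrightarrow>
      F c \<le> F (c(u := c u - \<delta>, v := c v + \<delta>))"
    and cong: "\<And>c c'. (\<And>j. j < n \<Longrightarrow> c j = c' j) \<Longrightarrow> F c = F c'"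
    and a_dec: "\<And>i j. i \<le> j \<Longrightarrow> j < n \<Longrightarrow> a j \<le> a i"
    and a_nonneg: "\<And>j. j < n \<Longrightarrow> 0 \<le> a j"
  shows "(\<And>j. j < n \<Longrightarrow> 0 \<le> b j) \<Longrightarrow> (\<And>r. r \<le> n \<Longrightarrow> (\<Sum>l<r. a l) \<le> (\<Sum>l<r. b l)) \<Longrightarrow>
    (\<Sum>l<n. a l) = (\<Sum>l<n. b l) \<Longrightarrow> 0 < (\<Sum>l<n. b l) \<Longrightarrow> F b \<le> F a"
proof (induction "card {l. l < n \<and> a l \<noteq> b l}" arbitrary: b rule: less_induct)
  case less
  show ?case
  proof (cases "\<exists>l<n. a l \<noteq> b l")
    case False
    then show ?thesis
      using cong[of b a] by auto
  next
    case True
    then obtain j k where jk: "j < k" "k < n" "a j < b j" "b k < a k"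
      and between: "\<And>l. j < l \<Longrightarrow> l < k \<Longrightarrow> a l = b l"
      using majorization_pivots[OF less.prems(2,3)] by blast
    define \<delta> where "\<delta> = min (b j - a j) (a k - b k)"
    define b' where "b' = b(j := b j - \<delta>, k := b k + \<delta>)"
    have \<delta>: "0 < \<delta>" "\<delta> \<le> b j - a j" "\<delta> \<le> a k - b k"
      using jk by (auto simp: \<delta>_def)
    have "a k \<le> a j"
      using a_dec jk by simp
    have "F b \<le> F b'"
      unfolding b'_def by (rule transfer) (use jk \<delta> less.prems(1,4) \<open>a k \<le> a j\<close> in auto)
    also have "F b' \<le> F a"
    proof (rule less.hyps)
      show "card {l. l < n \<and> a l \<noteq> b' l} < card {l. l < n \<and> a l \<noteq> b l}"
        unfolding b'_def \<delta>_def using jk by (intro psubset_card_mono transfer_reduces_differences) auto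
      show "0 \<le> b' l" if "l < n" for l
        using less.prems(1)[OF that] a_nonneg[of j] jk \<delta> that by (auto simp: b'_def)
      show "(\<Sum>l<r. a l) \<le> (\<Sum>l<r. b' l)" if "r \<le> n" for r
        unfolding b'_def using prefix_sums_after_transfer[OF less.prems(2) jk(1,2) between \<delta>(2) that] .
      have "(\<Sum>l<n. b' l) = (\<Sum>l<n. b l)"
        using sum_lessThan_transfer[of j k b \<delta> n] jk by (simp add: b'_def)
      then show "(\<Sum>l<n. a l) = (\<Sum>l<n. b' l)" "0 < (\<Sum>l<n. b' l)"
        using less.prems(3,4) by simp_all
    qed
    finally show ?thesis .
  qed
qed

section \<open>Permutation invariance and Schur-concavity\<close>

definition sort_desc :: "nat \<Rightarrow> (nat \<Rightarrow> real) \<Rightarrow> nat \<Rightarrow> real" where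
  "sort_desc n c i = (if i < n then rev (sort (map c [0..<n])) ! i else 0)"

lemma sort_desc_permutes: "\<exists>p. p permutes {..<n} \<and> (\<forall>i<n. sort_desc n c i = c (p i))"
proof -
  have "mset (rev (sort (map c [0..<n]))) = mset (map c [0..<n])"
    by simp
  then obtain p where p: "p permutes {..<length (map c [0..<n])}"
    "permute_list p (map c [0..<n]) = rev (sort (map c [0..<n]))"
    by (rule mset_eq_permutation)
  have "sort_desc n c i = c (p i)" if "i < n" for i
    using that permutes_in_image[OF p(1)] permute_list_nth[OF p(1)]
    by (simp add: sort_desc_def flip: p(2))
  then show ?thesis
    using p(1) by auto
qed

lemma sort_desc_antimono: "i \<le> j \<Longrightarrow> j < n \<Longrightarrow> sort_desc n c j \<le> sort_desc n c i"
proof -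
  assume ij: "i \<le> j" "j < n"
  have "sorted_wrt (\<ge>) (rev (sort (map c [0..<n])))"
    by (simp add: sorted_wrt_rev)
  then show ?thesis
    using ij sorted_wrt_nth_less[of "(\<ge>)" "rev (sort (map c [0..<n]))" i j]
    by (cases "i = j") (auto simp: sort_desc_def)
qed

lemma top_sum_eq_sum_sort_desc: "k \<le> n \<Longrightarrow> top_sum n c k = (\<Sum>i<k. sort_desc n c i)"
  by (simp add: top_sum_def sort_desc_def sum_list_sum_nth min_def atLeast0LessThan)

lemma sum_sort_desc: "(\<Sum>i<n. sort_desc n c i) = (\<Sum>i<n. c i)"
proof -
  obtain p where p: "p permutes {..<n}" "\<And>i. i < n \<Longrightarrow> sort_desc n c i = c (p i)"
    using sort_desc_permutes[of n c] by blast
  then show ?thesis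
    using sum.permute[OF p(1), of c] by simp
qed

lemma sort_desc_nonneg:
  assumes "\<And>j. j < n \<Longrightarrow> 0 \<le> c j"
  shows "0 \<le> sort_desc n c i"
proof (cases "i < n")
  case True
  obtain p where p: "p permutes {..<n}" "\<forall>i<n. sort_desc n c i = c (p i)"
    using sort_desc_permutes[of n c] by blast
  have "p i < n"
    using permutes_in_image[OF p(1)] True by simp
  then show ?thesis
    using p(2) True assms by simp
next
  case False
  then show ?thesis
    by (simp add: sort_desc_def)
qed

lemma card_nonzero_sort_desc:
  "card {l. l < n \<and> sort_desc n c l \<noteq> 0} = card {j. j < n \<and> c j \<noteq> 0}"
proof -
  obtain p where p: "p permutes {..<n}" "\<forall>i<n. sort_desc n c i = c (p i)"
    using sort_desc_permutes[of n c] by blast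
  have "bij_betw p {l \<in> {..<n}. sort_desc n c l \<noteq> 0} {j \<in> {..<n}. c j \<noteq> 0}"
    by (rule bij_betw_Collect[OF permutes_imp_bij[OF p(1)]]) (use p(2) in auto)
  then show ?thesis
    by (simp add: bij_betw_same_card)
qed

lemma permute_columns_in_signmats:
  assumes "p permutes {..<n}" "S \<in> signmats m n"
  shows "(\<lambda>i j. S i (p j)) \<in> signmats m n"
proof (rule signmatsI)
  show "S i (p j) = 1 \<or> S i (p j) = -1" if "i < m" "j < n" for i j
    using signmats_entry[OF assms(2) that(1)] permutes_in_image[OF assms(1)] that(2) by simp
  show "S i (p j) = 0" if "\<not> (i < m \<and> j < n)" for i j
    using signmats_outside[OF assms(2)] permutes_in_image[OF assms(1)] permutes_not_in[OF assms(1)] that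
    by (cases "j < n") auto
qed

lemma distortion_permute_columns:
  assumes "p permutes {..<n}"
  shows "distortion m n (\<lambda>i j. S i (p j)) (x \<circ> p) = distortion m n S x"
  using sum.permute[OF assms, of "\<lambda>j. Phi_of m S _ j * x j"] sum.permute[OF assms, of "\<lambda>j. (x j)\<^sup>2"]
  by (simp add: distortion_def Phi_of_def o_def)

lemma moment_permute:
  assumes "p permutes {..<n}"
  shows "moment m n q (x \<circ> p) = moment m n q x"
proof -
  have ip: "inv p permutes {..<n}"
    using permutes_inv[OF assms] .
  have "(\<Sum>S\<in>signmats m n. distortion m n S (x \<circ> p) ^ q) = (\<Sum>S\<in>signmats m n. distortion m n S x ^ q)"
  proof (rule sum.reindex_bij_witness[of _ "\<lambda>S i j. S i (p j)" "\<lambda>S i j. S i (inv p j)"])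
    fix S assume S: "S \<in> signmats m n"
    show "(\<lambda>i j. S i (p j)) \<in> signmats m n" "(\<lambda>i j. S i (inv p j)) \<in> signmats m n"
      using permute_columns_in_signmats[OF assms S] permute_columns_in_signmats[OF ip S] by auto
    show "(\<lambda>i j. S i (inv p (p j))) = S" "(\<lambda>i j. S i (p (inv p j))) = S"
      using permutes_inverses[OF assms] by auto
    show "distortion m n (\<lambda>i j. S i (inv p j)) x ^ q = distortion m n S (x \<circ> p) ^ q"
      using distortion_permute_columns[OF assms, of m "\<lambda>i j. S i (inv p j)" x] permutes_inverses[OF assms]
      by simp
  qed
  then show ?thesis
    unfolding moment_def integral_pmf_of_set[OF signmats_nonempty finite_signmats] by simp
qed

lemma sq_moment_sort_desc: "sq_moment m n q (sort_desc n c) = sq_moment m n q c"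
proof -
  obtain p where p: "p permutes {..<n}" "\<And>i. i < n \<Longrightarrow> sort_desc n c i = c (p i)"
    using sort_desc_permutes[of n c] by blast
  have "sq_moment m n q (sort_desc n c) = moment m n q ((\<lambda>j. sqrt (c j)) \<circ> p)"
    using p(2) by (intro moment_cong) simp
  also have "\<dots> = sq_moment m n q c"
    by (rule moment_permute[OF p(1)])
  finally show ?thesis .
qed

lemma sq_moment_le_if_majorized:
  assumes "m > 0" and a_dec: "\<And>i j. i \<le> j \<Longrightarrow> j < n \<Longrightarrow> a j \<le> a i"
    and "\<And>j. j < n \<Longrightarrow> 0 \<le> a j" "\<And>j. j < n \<Longrightarrow> 0 \<le> b j"
    and "\<And>r. r \<le> n \<Longrightarrow> (\<Sum>l<r. a l) \<le> (\<Sum>l<r. b l)"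
    and "(\<Sum>l<n. a l) = (\<Sum>l<n. b l)" "0 < (\<Sum>l<n. b l)"
  shows "sq_moment m n q b \<le> sq_moment m n q a"
  by (rule le_if_majorized_by_transfers[where F = "sq_moment m n q", OF sq_moment_transfer_mono[OF assms(1)]
        moment_cong a_dec assms(3-7)]) auto

theorem schur_concave_sq_moment:
  assumes "m > 0"
  shows "schur_concave_on n (sq_domain n) (sq_moment m n q)"
  unfolding schur_concave_on_def
proof (intro ballI impI)
  fix a b assume a: "a \<in> sq_domain n" and b: "b \<in> sq_domain n" and maj: "majorized n a b"
  have a_nonneg: "\<And>j. j < n \<Longrightarrow> 0 \<le> a j" and b_nonneg: "\<And>j. j < n \<Longrightarrow> 0 \<le> b j"
    using a b by (auto simp: sq_domain_def)
  have "0 < (\<Sum>j<n. b j)"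
    using b by (auto simp: sq_domain_def intro!: sum_pos2)
  then have "sq_moment m n q (sort_desc n b) \<le> sq_moment m n q (sort_desc n a)"
    using maj by (intro sq_moment_le_if_majorized[OF assms] sort_desc_antimono sort_desc_nonneg a_nonneg b_nonneg)
      (auto simp: majorized_def top_sum_eq_sum_sort_desc sum_sort_desc)
  then show "sq_moment m n q b \<le> sq_moment m n q a"
    by (simp add: sq_moment_sort_desc)
qed

section \<open>Flat vectors and the binomial law\<close>

lemma pmf_of_set_bool_matrices:
  "pmf_of_set (bool_matrices m n) =
    Pi_pmf {..<m} (\<lambda>_. False) (\<lambda>_. Pi_pmf {..<n} False (\<lambda>_. bernoulli_pmf (1/2)))"
proof -
  have row: "Pi_pmf {..<n} False (\<lambda>_. bernoulli_pmf (1/2)) = pmf_of_set (PiE_dflt {..<n} False (\<lambda>_. UNIV))"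
    unfolding bernoulli_pmf_half_conv_pmf_of_set by (rule Pi_pmf_of_set) auto
  have "(\<lambda>_. False) \<in> PiE_dflt {..<n} False (\<lambda>_. UNIV)"
    by (simp add: PiE_dflt_def)
  moreover have "finite (PiE_dflt {..<n} False (\<lambda>_::nat. UNIV :: bool set))"
    by (intro finite_PiE_dflt) auto
  ultimately have "pmf_of_set (bool_matrices m n) =
      Pi_pmf {..<m} (\<lambda>_. False) (\<lambda>_. pmf_of_set (PiE_dflt {..<n} False (\<lambda>_. UNIV)))"
    unfolding bool_matrices_def by (intro Pi_pmf_of_set[symmetric]) auto
  then show ?thesis
    by (simp add: row)
qed

lemma pmf_of_set_signmats:
  "pmf_of_set (signmats m n) = map_pmf (sign_matrix_of m n)
    (Pi_pmf {..<m} (\<lambda>_. False) (\<lambda>_. Pi_pmf {..<n} False (\<lambda>_. bernoulli_pmf (1/2))))"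
  unfolding pmf_of_set_bool_matrices[symmetric]
  using map_pmf_of_set_bij_betw[OF bij_betw_sign_matrix_of bool_matrices_nonempty finite_bool_matrices]
  by simp

lemma map_pmf_count_binomial:
  fixes T :: "nat set"
  assumes "T \<subseteq> {..<n}" "card T = K"
  shows "map_pmf (\<lambda>f. card {j \<in> T. f j}) (Pi_pmf {..<n} False (\<lambda>_. bernoulli_pmf (1/2))) =
    binomial_pmf K (1/2)"
proof -
  have "finite T"
    using assms(1) finite_subset by blast
  then have "binomial_pmf K (1/2) =
      map_pmf (\<lambda>f. card {j \<in> T. f j}) (Pi_pmf T False (\<lambda>_. bernoulli_pmf (1/2)))"
    using assms(2) by (rule binomial_pmf_altdef') simp
  also have "Pi_pmf T False (\<lambda>_. bernoulli_pmf (1/2)) =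
      map_pmf (\<lambda>f j. if j \<in> T then f j else False) (Pi_pmf {..<n} False (\<lambda>_. bernoulli_pmf (1/2)))"
    by (rule Pi_pmf_subset) (use assms(1) in auto)
  also have "map_pmf (\<lambda>f. card {j \<in> T. f j}) \<dots> =
      map_pmf (\<lambda>f. card {j \<in> T. f j}) (Pi_pmf {..<n} False (\<lambda>_. bernoulli_pmf (1/2)))"
  proof -
    have "{j \<in> T. if j \<in> T then f j else False} = {j \<in> T. f j}" for f :: "nat \<Rightarrow> bool"
      by auto
    then show ?thesis
      by (simp add: map_pmf_comp)
  qed
  finally show ?thesis
    by simp
qed

lemma sum_signs:
  assumes "finite T"
  shows "(\<Sum>j\<in>T. if f j then 1 else -1 :: real) = 2 * real (card {j \<in> T. f j}) - real (card T)"
proof -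
  have "T = {j \<in> T. f j} \<union> {j \<in> T. \<not> f j}"
    by auto
  then have "card T = card ({j \<in> T. f j} \<union> {j \<in> T. \<not> f j})"
    by simp
  also have "\<dots> = card {j \<in> T. f j} + card {j \<in> T. \<not> f j}"
    using assms by (intro card_Un_disjoint) auto
  finally have "card T = card {j \<in> T. f j} + card {j \<in> T. \<not> f j}" .
  then show ?thesis
    using assms by (simp add: sum.If_cases Int_def)
qed

lemma standardized_sq:
  assumes "K > 0"
  shows "((real c - real K / 2) / sqrt (real K / 4))\<^sup>2 = (2 * real c - real K)\<^sup>2 / real K"
proof -
  have "((real c - real K / 2) / sqrt (real K / 4))\<^sup>2 = (real c - real K / 2)\<^sup>2 / (real K / 4)"
    by (simp add: power_divide)
  also have "\<dots> = (2 * real c - real K)\<^sup>2 / real K"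
    using assms by (simp add: field_simps power2_eq_square)
  finally show ?thesis .
qed

lemma distortion_flat:
  assumes "m > 0" "T \<subseteq> {..<n}" "card T = K" "K > 0" "t \<noteq> 0"
    and x: "\<And>j. j < n \<Longrightarrow> x j = (if j \<in> T then t else 0)"
  shows "distortion m n (sign_matrix_of m n h) x =
    (1 / real m) * (\<Sum>i<m. ((real (card {j \<in> T. h i j}) - real K / 2) / sqrt (real K / 4))\<^sup>2 - 1)"
proof -
  let ?A = "\<lambda>i. (2 * real (card {j \<in> T. h i j}) - real K)\<^sup>2"
  have on_T: "(\<Sum>j<n. f j * x j) = t * (\<Sum>j\<in>T. f j)" for f
  proof -
    have "(\<Sum>j<n. f j * x j) = (\<Sum>j<n. if j \<in> T then t * f j else 0)"
      using x by (intro sum.cong) auto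
    also have "\<dots> = (\<Sum>j\<in>{..<n} \<inter> T. t * f j)"
      by (simp add: sum.inter_restrict)
    also have "{..<n} \<inter> T = T"
      using assms(2) by auto
    finally show ?thesis
      by (simp add: sum_distrib_left)
  qed
  have "finite T"
    using assms(2) finite_subset by blast
  have N: "(\<Sum>j<n. (x j)\<^sup>2) = real K * t\<^sup>2"
    using on_T[of x] x assms(2,3) by (auto simp: power2_eq_square subset_eq)
  have row: "(\<Sum>j<n. Phi_of m (sign_matrix_of m n h) i j * x j)\<^sup>2 = t\<^sup>2 * ?A i / real m" if "i < m" for i
  proof -
    have "(\<Sum>j\<in>T. Phi_of m (sign_matrix_of m n h) i j) = (\<Sum>j\<in>T. if h i j then 1 else -1) / sqrt (real m)"
      unfolding sum_divide_distrib using that assms(2) by (intro sum.cong) (auto simp: Phi_of_def sign_matrix_of_def)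
    then show ?thesis
      using on_T sum_signs[OF \<open>finite T\<close>] assms(1,3) by (simp add: power_mult_distrib power_divide)
  qed
  have "distortion m n (sign_matrix_of m n h) x = (\<Sum>i<m. t\<^sup>2 * ?A i / real m) / (real K * t\<^sup>2) - 1"
    by (simp add: distortion_def N row)
  also have "\<dots> = (1 / real m) * (\<Sum>i<m. ?A i / real K - 1)"
    using assms(1,4,5) by (simp add: sum_subtractf sum_divide_distrib[symmetric] sum_distrib_left[symmetric] field_simps)
  finally show ?thesis
    using standardized_sq[OF assms(4)] by simp
qed

lemma moment_flat:
  assumes "m > 0" "T \<subseteq> {..<n}" "card T = K" "K > 0" "t \<noteq> 0"
    and "\<And>j. j < n \<Longrightarrow> x j = (if j \<in> T then t else 0)"
  shows "moment m n q x = estar_moment m K q"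
proof -
  let ?P = "Pi_pmf {..<m} (\<lambda>_. False) (\<lambda>_. Pi_pmf {..<n} False (\<lambda>_. bernoulli_pmf (1/2)))"
  let ?E = "\<lambda>B. ((1 / real m) * (\<Sum>i<m. ((real (B i) - real K / 2) / sqrt (real K / 4))\<^sup>2 - 1)) ^ q"
  have "moment m n q x = measure_pmf.expectation ?P (\<lambda>h. ?E (\<lambda>i. card {j \<in> T. h i j}))"
    unfolding moment_def pmf_of_set_signmats using distortion_flat[OF assms] by simp
  also have "\<dots> = measure_pmf.expectation (map_pmf (\<lambda>h i. card {j \<in> T. h i j}) ?P) ?E"
    by simp
  also have "map_pmf (\<lambda>h i. card {j \<in> T. h i j}) ?P =
      Pi_pmf {..<m} 0 (\<lambda>_. map_pmf (\<lambda>f. card {j \<in> T. f j}) (Pi_pmf {..<n} False (\<lambda>_. bernoulli_pmf (1/2))))"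
    using Pi_pmf_map[of "{..<m}" "\<lambda>f. card {j \<in> T. f j}" "\<lambda>_. False" 0
        "\<lambda>_. Pi_pmf {..<n} False (\<lambda>_. bernoulli_pmf (1/2))"] by (simp add: o_def)
  finally show ?thesis
    unfolding estar_moment_def map_pmf_count_binomial[OF assms(2,3)] .
qed

section \<open>Comparison with \<open>E\<^sub>*\<close>\<close>

lemma mean_prefix_ge:
  fixes a :: "nat \<Rightarrow> real"
  assumes dec: "\<And>i j. i \<le> j \<Longrightarrow> j < K \<Longrightarrow> a j \<le> a i" and "k \<le> K"
  shows "real k * (\<Sum>l<K. a l) \<le> real K * (\<Sum>l<k. a l)"
proof (cases "k = K")
  case False
  then have k: "k < K"
    using assms(2) by simp
  define S1 where "S1 = (\<Sum>l<k. a l)"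
  define S2 where "S2 = (\<Sum>l\<in>{k..<K}. a l)"
  have "(\<Sum>l<k. a k) \<le> S1"
    unfolding S1_def using dec k by (intro sum_mono) auto
  then have S1: "real k * a k \<le> S1"
    by simp
  have "S2 \<le> (\<Sum>l\<in>{k..<K}. a k)"
    unfolding S2_def using dec by (intro sum_mono) auto
  then have S2: "S2 \<le> real (K - k) * a k"
    by simp
  have "real k * S2 \<le> real k * (real (K - k) * a k)"
    using S2 by (intro mult_left_mono) auto
  also have "\<dots> = real (K - k) * (real k * a k)"
    by simp
  also have "\<dots> \<le> real (K - k) * S1"
    using S1 by (intro mult_left_mono) auto
  finally have "real k * S2 \<le> real (K - k) * S1" .
  moreover have "(\<Sum>l<K. a l) = S1 + S2"
    unfolding S1_def S2_def using sum_lessThan_split[of k K a] k by simp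
  ultimately show ?thesis
    using k by (simp add: S1_def of_nat_diff algebra_simps)
qed simp

lemma antimono_zero_beyond_card:
  fixes a :: "nat \<Rightarrow> real"
  assumes dec: "\<And>i j. i \<le> j \<Longrightarrow> j < n \<Longrightarrow> a j \<le> a i" and nonneg: "\<And>j. j < n \<Longrightarrow> 0 \<le> a j"
    and "card {j. j < n \<and> a j \<noteq> 0} \<le> K" "K \<le> l" "l < n"
  shows "a l = 0"
proof (rule ccontr)
  assume "a l \<noteq> 0"
  then have "0 < a l"
    using nonneg[OF assms(5)] by simp
  then have "a j \<noteq> 0" if "j \<le> l" for j
    using dec[OF that assms(5)] by simp
  then have "{..l} \<subseteq> {j. j < n \<and> a j \<noteq> 0}"
    using assms(5) by auto
  then have "card {..l} \<le> card {j. j < n \<and> a j \<noteq> 0}"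
    by (intro card_mono) auto
  then show False
    using assms(3,4) by simp
qed

lemma sort_desc_eq_0_beyond_support:
  assumes "\<And>j. j < n \<Longrightarrow> 0 \<le> c j" "card {j. j < n \<and> c j \<noteq> 0} \<le> K" "K \<le> l" "l < n"
  shows "sort_desc n c l = 0"
  by (rule antimono_zero_beyond_card[where n = n and K = K])
    (use sort_desc_antimono sort_desc_nonneg[OF assms(1)] card_nonzero_sort_desc[of n c] assms(2-4) in auto)

lemma sum_flat:
  fixes c :: real
  shows "(\<Sum>l<r. if l < K then c else 0) = real (min r K) * c"
proof -
  have "{..<r} \<inter> {l. l < K} = {..<min r K}"
    by auto
  then show ?thesis
    by (simp add: sum.If_cases)
qed

lemma prefix_flat_le:
  fixes a :: "nat \<Rightarrow> real"
  assumes dec: "\<And>i j. i \<le> j \<Longrightarrow> j < n \<Longrightarrow> a j \<le> a i"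
    and zero: "\<And>l. K \<le> l \<Longrightarrow> l < n \<Longrightarrow> a l = 0"
    and "0 < K" "K \<le> n" "r \<le> n" and total: "(\<Sum>l<n. a l) = N"
  shows "(\<Sum>l<r. if l < K then N / real K else 0) \<le> (\<Sum>l<r. a l)"
proof -
  have tail: "(\<Sum>l<r. a l) = (\<Sum>l<K. a l)" if "K \<le> r" "r \<le> n" for r
    using sum_lessThan_split[of K r a] that zero by (simp add: sum.neutral)
  show ?thesis
  proof (cases "K \<le> r")
    case True
    then show ?thesis
      using assms(3) tail[OF True assms(5)] tail[OF assms(4) order_refl] total by (simp add: sum_flat)
  next
    case False
    have "real r * (\<Sum>l<K. a l) \<le> real K * (\<Sum>l<r. a l)"
      using False assms(4) by (intro mean_prefix_ge) (auto intro: dec)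
    then have "real r * (\<Sum>l<K. a l) / real K \<le> (\<Sum>l<r. a l)"
      using assms(3) by (simp add: divide_le_eq mult.commute)
    then show ?thesis
      using False tail[OF assms(4) order_refl] total by (simp add: sum_flat)
  qed
qed

lemma l0_bounds:
  assumes "nonzero_vec n x"
  shows "0 < l0 n x" "l0 n x \<le> n"
proof -
  show "0 < l0 n x"
    using assms by (auto simp: l0_def nonzero_vec_def card_gt_0_iff)
  show "l0 n x \<le> n"
    unfolding l0_def using card_mono[of "{..<n}" "{j. j < n \<and> x j \<noteq> 0}"] by auto
qed

theorem moment_le_estar_moment:
  assumes "m > 0" "nonzero_vec n x"
  shows "moment m n q x \<le> estar_moment m (l0 n x) q"
proof -
  define c where "c j = (x j)\<^sup>2" for j
  define K where "K = l0 n x"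
  define N where "N = (\<Sum>j<n. c j)"
  define u where "u l = (if l < K then N / real K else 0)" for l
  let ?a = "sort_desc n c"
  have N: "0 < N"
    unfolding N_def c_def using sum_squares_pos[OF assms(2)] .
  have K: "0 < K" "K \<le> n"
    unfolding K_def using l0_bounds[OF assms(2)] by auto
  have dec: "\<And>i j. i \<le> j \<Longrightarrow> j < n \<Longrightarrow> ?a j \<le> ?a i"
    by (rule sort_desc_antimono)
  have nonneg: "\<And>j. 0 \<le> ?a j"
    by (rule sort_desc_nonneg) (simp add: c_def)
  have zero: "?a l = 0" if "K \<le> l" "l < n" for l
    using sort_desc_eq_0_beyond_support[of n c K l] that by (simp add: c_def K_def l0_def)
  have sum_a: "(\<Sum>l<n. ?a l) = N"
    by (simp add: sum_sort_desc N_def)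
  have sum_u: "(\<Sum>l<n. u l) = N"
    using K by (simp add: u_def sum_flat)
  have "moment m n q x = sq_moment m n q c"
    by (rule moment_eq_if_squares_eq[OF assms]) (simp add: c_def)
  also have "\<dots> = sq_moment m n q ?a"
    by (simp add: sq_moment_sort_desc)
  also have "\<dots> \<le> sq_moment m n q u"
  proof (rule sq_moment_le_if_majorized[OF assms(1)])
    show "u j \<le> u i" if "i \<le> j" "j < n" for i j
      using N that by (simp add: u_def)
    show "0 \<le> u j" for j
      using N by (simp add: u_def)
    show "(\<Sum>l<r. u l) \<le> (\<Sum>l<r. ?a l)" if "r \<le> n" for r
      using prefix_flat_le[where a = ?a and n = n and K = K and r = r, OF dec zero K that sum_a]
      by (simp add: u_def)
  qed (use nonneg sum_a sum_u N in auto)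
  also have "sq_moment m n q u = estar_moment m K q"
    by (rule moment_flat[OF assms(1), where T = "{..<K}" and t = "sqrt (N / real K)"])
      (use K N in \<open>auto simp: u_def\<close>)
  finally show ?thesis
    by (simp add: K_def)
qed

theorem moment_eq_estar_moment_if_constant:
  assumes "m > 0" "nonzero_vec n x" "\<And>j k. j < n \<Longrightarrow> k < n \<Longrightarrow> x j = x k"
  shows "moment m n q x = estar_moment m (l0 n x) q"
proof -
  obtain k where k: "k < n" "x k \<noteq> 0"
    using assms(2) by (auto simp: nonzero_vec_def)
  have "x j \<noteq> 0" if "j < n" for j
    using assms(3)[OF that k(1)] k(2) by simp
  then have "{j. j < n \<and> x j \<noteq> 0} = {..<n}"
    by auto
  then have "l0 n x = n"
    by (simp add: l0_def)
  moreover have "moment m n q x = estar_moment m n q"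
  proof (rule moment_flat[OF assms(1), where T = "{..<n}" and t = "x k"])
    show "x j = (if j \<in> {..<n} then x k else 0)" if "j < n" for j
      using assms(3)[OF that k(1)] that by simp
  qed (use k in auto)
  ultimately show ?thesis
    by simp
qed

theorem theorem1:
  fixes m n :: nat
  assumes "m > 0" and "n > 0"
  shows "(\<forall>q::nat. q > 0 \<longrightarrow>
            (\<forall>x y. nonzero_vec n x \<longrightarrow> (\<forall>j<n. (x j)\<^sup>2 = (y j)\<^sup>2) \<longrightarrow>
                   moment m n q x = moment m n q y)
          \<and> (\<exists>P. poly_fun n P \<and>
                 (\<forall>x. nonzero_vec n x \<longrightarrow>
                    (\<Sum>j<n. (x j)\<^sup>2) ^ q * moment m n q x = P (\<lambda>j. (x j)\<^sup>2)))
          \<and> schur_concave_on n (sq_domain n) (\<lambda>a. moment m n q (\<lambda>j. sqrt (a j))))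
       \<and> (\<forall>x. nonzero_vec n x \<longrightarrow> (\<forall>q::nat. q \<ge> 2 \<longrightarrow>
            moment m n q x \<le> estar_moment m (l0 n x) q
          \<and> ((\<forall>j<n. \<forall>k<n. x j = x k) \<longrightarrow> moment m n q x = estar_moment m (l0 n x) q)))"
proof (intro conjI allI impI)
  fix q :: nat
  show "moment m n q x = moment m n q y" if "nonzero_vec n x" "\<forall>j<n. (x j)\<^sup>2 = (y j)\<^sup>2" for x y
    using moment_eq_if_squares_eq[OF assms(1) that(1)] that(2) by simp
  show "\<exists>P. poly_fun n P \<and> (\<forall>x. nonzero_vec n x \<longrightarrow>
      (\<Sum>j<n. (x j)\<^sup>2) ^ q * moment m n q x = P (\<lambda>j. (x j)\<^sup>2))"
    by (rule moment_poly[OF assms(1)])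
  show "schur_concave_on n (sq_domain n) (\<lambda>a. moment m n q (\<lambda>j. sqrt (a j)))"
    by (rule schur_concave_sq_moment[OF assms(1)])
next
  fix x and q :: nat
  assume x: "nonzero_vec n x"
  show "moment m n q x \<le> estar_moment m (l0 n x) q"
    by (rule moment_le_estar_moment[OF assms(1) x])
  show "moment m n q x = estar_moment m (l0 n x) q" if "\<forall>j<n. \<forall>k<n. x j = x k"
    using moment_eq_estar_moment_if_constant[OF assms(1) x] that by blast
qed

end
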